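(* Let $F$ be a finite field of characteristic $3$. Let $k\ge 0$ be an integer, $m=3k+1$, and $t$ an integer with $t^3\equiv 1\pmod m$ and $\gcd(m,t-1)=1$. Let $G=T_{3m}=\langle x,y\mid x^m=y^3=1,\ y^{-1}xy=x^t\rangle$ (of order $3m$) and $FG$ its group algebra. Let $s\in FG$ be the sum of all elements of $G$ whose order is a power of $3$ (including the identity), and $\mathrm{Anh}(s)=\{\alpha\in FG\mid \alpha s=s\alpha=0\}$. Then $\dim_F J(FG)=\dim_F \mathrm{Anh}(s)=2$.
   Context: $J(FG)$ denotes the Jacobson radical of $FG$. *)

theory Defs
  imports "HOL-Algebra.Algebra" "HOL-Number_Theory.Cong" "HOL-Library.Function_Algebras"
begin

definition left_ideal :: "('r, 'm) ring_scheme \<Rightarrow> 'r set \<Rightarrow> bool" where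
  "left_ideal R I \<longleftrightarrow> additive_subgroup I R \<and>
     (\<forall>r\<in>carrier R. \<forall>a\<in>I. r \<otimes>\<^bsub>R\<^esub> a \<in> I)"

definition maximal_left_ideal :: "('r, 'm) ring_scheme \<Rightarrow> 'r set \<Rightarrow> bool" where
  "maximal_left_ideal R I \<longleftrightarrow> left_ideal R I \<and> I \<noteq> carrier R \<and>
     (\<forall>K. left_ideal R K \<and> I \<subseteq> K \<longrightarrow> K = I \<or> K = carrier R)"

definition jacobson_radical :: "('r, 'm) ring_scheme \<Rightarrow> 'r set" where
  "jacobson_radical R = carrier R \<inter> \<Inter>{I. maximal_left_ideal R I}"

definition group_algebra :: "('g, 'n) monoid_scheme \<Rightarrow> ('g \<Rightarrow> 'a::field) ring" where
  "group_algebra G =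
     \<lparr> partial_object.carrier = {f. \<forall>z. z \<notin> carrier G \<longrightarrow> f z = 0},
       monoid.mult = (\<lambda>f h z. if z \<in> carrier G
                        then (\<Sum>u\<in>carrier G. f u * h (inv\<^bsub>G\<^esub> u \<otimes>\<^bsub>G\<^esub> z)) else 0),
       monoid.one = (\<lambda>z. if z = \<one>\<^bsub>G\<^esub> then 1 else 0),
       ring.zero = (\<lambda>z. 0),
       ring.add = (\<lambda>f h z. f z + h z) \<rparr>"

definition ga_scale :: "'a::field \<Rightarrow> ('g \<Rightarrow> 'a) \<Rightarrow> ('g \<Rightarrow> 'a)" where
  "ga_scale c f = (\<lambda>z. c * f z)"

definition dim_F :: "('g \<Rightarrow> 'a::field) set \<Rightarrow> nat" where
  "dim_F S = vector_space.dim ga_scale S"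

definition s_elem :: "('g, 'n) monoid_scheme \<Rightarrow> 'g \<Rightarrow> 'a::field" where
  "s_elem G = (\<lambda>z. if z \<in> carrier G \<and> (\<exists>n::nat. group.ord G z = 3 ^ n) then 1 else 0)"

definition Anh :: "('g, 'n) monoid_scheme \<Rightarrow> ('g \<Rightarrow> 'a::field) \<Rightarrow> ('g \<Rightarrow> 'a) set" where
  "Anh G a = {\<alpha> \<in> carrier (group_algebra G).
      \<alpha> \<otimes>\<^bsub>group_algebra G\<^esub> a = \<zero>\<^bsub>group_algebra G\<^esub> \<and>
      a \<otimes>\<^bsub>group_algebra G\<^esub> \<alpha> = \<zero>\<^bsub>group_algebra G\<^esub>}"

end

theory Submission
  imports Defs
begin

text \<open>
  Write \<open>N\<close> for the cyclic normal subgroup generated by \<open>x\<close> and \<open>e\<close> for the sum of its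
  elements. Since \<open>|N| = m\<close> is \<open>1\<close> modulo \<open>3\<close>, \<open>e\<close> is a central idempotent of \<open>FG\<close>. Conjugation
  by \<open>y\<close> has no fixed points on \<open>N - {1}\<close>, so \<open>1 - e\<close> is a relative trace
  \<open>\<Sum>g. g d g\<^sup>-\<^sup>1\<close>, with \<open>d\<close> minus the sum of a set of representatives of the \<open>y\<close>-orbits on
  \<open>N - {1}\<close>. A Gaschuetz-type averaging argument shows that an idempotent relative trace
  annihilates \<open>J(FG)\<close>; hence \<open>J(FG)\<close> lies in \<open>e FG\<close>, i.e. consists of functions constant on
  the cosets of \<open>N\<close>, and in the augmentation ideal. Conversely, these coset-constant elements
  of augmentation zero form a left ideal (the augmentation ideal of \<open>F[G/N] = F C\<^sub>3\<close>) in which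
  every cube vanishes, because \<open>(a\<^sub>0 + a\<^sub>1 y + a\<^sub>2 y\<^sup>2)\<^sup>3 = (a\<^sub>0 + a\<^sub>1 + a\<^sub>2)\<^sup>3\<close> in characteristic \<open>3\<close>; a nil left
  ideal lies in \<open>J(FG)\<close>. Finally the elements of \<open>3\<close>-power
  order are \<open>1\<close> and the elements outside \<open>N\<close>, so \<open>s = 1 + \<Sum>G - e\<close>, and \<open>\<alpha> s = s \<alpha> = 0\<close>
  cuts out the same ideal.
\<close>

section \<open>Left ideals and the Jacobson radical\<close>

context ring
begin

lemma left_idealI:
  assumes "I \<subseteq> carrier R" and "\<zero> \<in> I"
    and "\<And>a b. a \<in> I \<Longrightarrow> b \<in> I \<Longrightarrow> a \<oplus> b \<in> I"
    and "\<And>r a. r \<in> carrier R \<Longrightarrow> a \<in> I \<Longrightarrow> r \<otimes> a \<in> I"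
  shows "left_ideal R I"
proof -
  have "\<ominus> a \<in> I" if "a \<in> I" for a
    using assms(1) assms(4)[of "\<ominus> \<one>" a] that by (auto simp: l_minus)
  then have "additive_subgroup I R"
    using assms(1-3) by (intro additive_subgroupI add.subgroupI) auto
  then show ?thesis
    using assms(4) by (simp add: left_ideal_def)
qed

lemma
  assumes "left_ideal R I"
  shows left_ideal_subset: "I \<subseteq> carrier R"
    and left_ideal_zero: "\<zero> \<in> I"
    and left_ideal_add: "a \<in> I \<Longrightarrow> b \<in> I \<Longrightarrow> a \<oplus> b \<in> I"
    and left_ideal_mult: "r \<in> carrier R \<Longrightarrow> a \<in> I \<Longrightarrow> r \<otimes> a \<in> I"
  using assms additive_subgroup.a_subset additive_subgroup.zero_closed
    additive_subgroup.a_closed additive_subgroup.a_inv_closed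
  by (fastforce simp: left_ideal_def)+

lemma left_ideal_one_imp_carrier:
  assumes "left_ideal R I" and "\<one> \<in> I"
  shows "I = carrier R"
  using assms left_ideal_subset left_ideal_mult[of I _ \<one>] by force

lemma maximal_left_ideal_left_ideal: "maximal_left_ideal R M \<Longrightarrow> left_ideal R M"
  by (simp add: maximal_left_ideal_def)

lemma one_notin_maximal_left_ideal: "maximal_left_ideal R M \<Longrightarrow> \<one> \<notin> M"
  using left_ideal_one_imp_carrier by (auto simp: maximal_left_ideal_def)

lemma left_ideal_add_principal:
  assumes I: "left_ideal R I" and v: "v \<in> carrier R"
  shows "left_ideal R {a \<oplus> r \<otimes> v | a r. a \<in> I \<and> r \<in> carrier R}" (is "left_ideal R ?K")
proof (rule left_idealI)
  have "\<zero> = \<zero> \<oplus> \<zero> \<otimes> v"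
    using v by simp
  then show "\<zero> \<in> ?K"
    using left_ideal_zero[OF I] by blast
next
  fix x y assume "x \<in> ?K" "y \<in> ?K"
  then obtain a r b s where ab: "a \<in> I" "b \<in> I" and rs: "r \<in> carrier R" "s \<in> carrier R"
    and "x = a \<oplus> r \<otimes> v" "y = b \<oplus> s \<otimes> v"
    by blast
  moreover have "a \<in> carrier R" "b \<in> carrier R"
    using ab left_ideal_subset[OF I] by auto
  ultimately have "x \<oplus> y = (a \<oplus> b) \<oplus> (r \<oplus> s) \<otimes> v"
    using v rs by (simp add: l_distr a_ac)
  moreover have "a \<oplus> b \<in> I" "r \<oplus> s \<in> carrier R"
    using ab rs left_ideal_add[OF I] by auto
  ultimately show "x \<oplus> y \<in> ?K"
    by blast
next
  fix s x assume s: "s \<in> carrier R" and "x \<in> ?K"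
  then obtain a r where x: "x = a \<oplus> r \<otimes> v" "a \<in> I" "r \<in> carrier R"
    by blast
  then have "s \<otimes> x = s \<otimes> a \<oplus> (s \<otimes> r) \<otimes> v"
    using s v left_ideal_subset[OF I] by (auto simp: r_distr m_assoc)
  then show "s \<otimes> x \<in> ?K"
    using x s left_ideal_mult[OF I] by blast
qed (use left_ideal_subset[OF I] v in auto)

lemma exists_maximal_left_ideal:
  assumes fin: "finite (carrier R)" and I: "left_ideal R I" and one: "\<one> \<notin> I"
  obtains M where "maximal_left_ideal R M" and "I \<subseteq> M"
proof -
  let ?S = "{K. left_ideal R K \<and> I \<subseteq> K \<and> \<one> \<notin> K}"
  have "?S \<subseteq> Pow (carrier R)"
    using left_ideal_subset by blast
  then have "finite ?S"
    using fin by (meson finite_Pow_iff rev_finite_subset)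
  moreover have "I \<in> ?S"
    using I one by blast
  ultimately obtain M where M: "M \<in> ?S" and M_max: "\<forall>K \<in> ?S. M \<subseteq> K \<longrightarrow> M = K"
    by (meson finite_has_maximal2)
  have "K = M \<or> K = carrier R" if "left_ideal R K" and "M \<subseteq> K" for K
  proof (cases "\<one> \<in> K")
    case True
    then show ?thesis using left_ideal_one_imp_carrier[OF that(1)] by blast
  next
    case False
    then show ?thesis using M M_max that by blast
  qed
  then have "maximal_left_ideal R M"
    using M left_ideal_subset by (auto simp: maximal_left_ideal_def)
  with M that show ?thesis
    by blast
qed

lemma jacobson_radical_left_ideal: "left_ideal R (jacobson_radical R)"
  unfolding jacobson_radical_def
  using maximal_left_ideal_left_ideal
  by (intro left_idealI) (auto intro: left_ideal_zero left_ideal_add left_ideal_mult)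

lemma jacobson_radical_left_unit:
  assumes fin: "finite (carrier R)" and z: "z \<in> jacobson_radical R"
  obtains u where "u \<in> carrier R" and "u \<otimes> (\<one> \<ominus> z) = \<one>"
proof -
  have zR: "z \<in> carrier R" and zM: "\<And>M. maximal_left_ideal R M \<Longrightarrow> z \<in> M"
    using z by (auto simp: jacobson_radical_def)
  let ?K = "{a \<oplus> r \<otimes> (\<one> \<ominus> z) | a r. a \<in> {\<zero>} \<and> r \<in> carrier R}"
  have K: "left_ideal R ?K"
    by (rule left_ideal_add_principal) (use zR in \<open>auto intro: left_idealI\<close>)
  have "\<one> \<in> ?K"
  proof (rule ccontr)
    assume "\<one> \<notin> ?K"
    then obtain M where M: "maximal_left_ideal R M" and KM: "?K \<subseteq> M"
      by (rule exists_maximal_left_ideal[OF fin K])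
    have "\<one> \<ominus> z = \<zero> \<oplus> \<one> \<otimes> (\<one> \<ominus> z)"
      using zR by simp
    then have "\<one> \<ominus> z \<in> M"
      using KM by blast
    then have "(\<one> \<ominus> z) \<oplus> z \<in> M"
      using zM[OF M] left_ideal_add[OF maximal_left_ideal_left_ideal[OF M]] by blast
    then have "\<one> \<in> M"
      using zR by (simp add: a_minus_def a_assoc l_neg)
    then show False
      using one_notin_maximal_left_ideal[OF M] by blast
  qed
  then obtain u where "u \<in> carrier R" and "\<one> = \<zero> \<oplus> u \<otimes> (\<one> \<ominus> z)"
    by blast
  with that zR show ?thesis
    by simp
qed

lemma jacobson_radical_idempotent_eq_zero:
  assumes fin: "finite (carrier R)" and e: "e \<in> jacobson_radical R" and idem: "e \<otimes> e = e"
  shows "e = \<zero>"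
proof -
  have eR: "e \<in> carrier R"
    using e by (simp add: jacobson_radical_def)
  obtain u where u: "u \<in> carrier R" "u \<otimes> (\<one> \<ominus> e) = \<one>"
    using jacobson_radical_left_unit[OF fin e] by blast
  have "(\<one> \<ominus> e) \<otimes> e = \<zero>"
    using eR idem by (simp add: a_minus_def l_distr l_minus r_neg)
  then have "u \<otimes> ((\<one> \<ominus> e) \<otimes> e) = \<zero>"
    using u by simp
  then show ?thesis
    using u eR by (simp flip: m_assoc)
qed

lemma maximal_left_ideal_add_principal:
  assumes M: "maximal_left_ideal R M" and v: "v \<in> carrier R" "v \<notin> M"
  obtains a r where "a \<in> M" and "r \<in> carrier R" and "\<one> = a \<oplus> r \<otimes> v"
proof -
  let ?K = "{a \<oplus> r \<otimes> v | a r. a \<in> M \<and> r \<in> carrier R}"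
  have MI: "left_ideal R M"
    using M by (rule maximal_left_ideal_left_ideal)
  have "a \<in> ?K" if "a \<in> M" for a
  proof -
    have "a = a \<oplus> \<zero> \<otimes> v"
      using that v left_ideal_subset[OF MI] by auto
    with that show ?thesis
      by blast
  qed
  moreover have "v = \<zero> \<oplus> \<one> \<otimes> v"
    using v by simp
  then have "v \<in> ?K"
    using left_ideal_zero[OF MI] by blast
  ultimately have "?K = carrier R"
    using M left_ideal_add_principal[OF MI v(1)] v(2) unfolding maximal_left_ideal_def by blast
  then have "\<one> \<in> ?K"
    by simp
  with that show ?thesis
    by blast
qed

lemma left_ideal_one_minus_pow:
  assumes M: "left_ideal R M" and q: "q \<in> carrier R" and one_minus: "\<one> \<ominus> q \<in> M"
  shows "\<one> \<ominus> q [^] (n::nat) \<in> M"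
proof (induction n)
  case 0
  show ?case
    using left_ideal_zero[OF M] by (simp add: a_minus_def r_neg)
next
  case (Suc n)
  have "\<one> \<ominus> q [^] Suc n = (\<one> \<ominus> q [^] n) \<oplus> q [^] n \<otimes> (\<one> \<ominus> q)"
    using q by (simp add: a_minus_def r_distr r_minus r_neg1 a_assoc)
  then show ?case
    using Suc left_ideal_add[OF M] left_ideal_mult[OF M] one_minus q by simp
qed

lemma nil_left_ideal_subset_jacobson_radical:
  assumes W: "left_ideal R W" and nil: "\<And>v. v \<in> W \<Longrightarrow> \<exists>n::nat. v [^] n = \<zero>"
  shows "W \<subseteq> jacobson_radical R"
proof -
  have "v \<in> M" if v: "v \<in> W" and M: "maximal_left_ideal R M" for v M
  proof (rule ccontr)
    assume "v \<notin> M"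
    moreover have vR: "v \<in> carrier R"
      using v left_ideal_subset[OF W] by blast
    ultimately obtain a r where a: "a \<in> M" and r: "r \<in> carrier R" and one: "\<one> = a \<oplus> r \<otimes> v"
      using maximal_left_ideal_add_principal[OF M] by blast
    have MI: "left_ideal R M"
      using M by (rule maximal_left_ideal_left_ideal)
    have q: "r \<otimes> v \<in> W" "r \<otimes> v \<in> carrier R"
      using left_ideal_mult[OF W r v] r vR by auto
    have "\<one> \<ominus> r \<otimes> v \<in> M"
      using one a q left_ideal_subset[OF MI] by (auto simp: a_minus_def a_assoc r_neg)
    moreover obtain n :: nat where "(r \<otimes> v) [^] n = \<zero>"
      using nil q by blast
    ultimately have "\<one> \<in> M"
      using left_ideal_one_minus_pow[OF MI q(2), of n] by (simp add: a_minus_def)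
    then show False
      using one_notin_maximal_left_ideal[OF M] by blast
  qed
  then show ?thesis
    using left_ideal_subset[OF W] by (auto simp: jacobson_radical_def)
qed

end

lemma (in vector_space) exists_linear_projection:
  assumes W: "subspace W"
  obtains p where "Vector_Spaces.linear scale scale p" and "range p = W"
    and "\<And>v. v \<in> W \<Longrightarrow> p v = v"
proof -
  interpret vector_space_pair scale scale ..
  obtain B where B: "B \<subseteq> W" "independent B" "W \<subseteq> span B"
    by (rule maximal_independent_subset)
  have span_B: "span B = W"
    using B W span_subspace by blast
  obtain p where p: "Vector_Spaces.linear scale scale p" "\<forall>b\<in>B. p b = id b" "range p = span (id ` B)"
    using linear_independent_extend_subspace[OF B(2)] by blast
  have "p v = v" if "v \<in> W" for v
    using linear_eq_on[OF p(1) linear_id, of v B] p(2) that span_B by simp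
  with p span_B that show ?thesis
    by simp
qed

lemma sum_fun_apply: "(\<Sum>i\<in>I. f i) z = (\<Sum>i\<in>I. f i z)"
  by (induction I rule: infinite_finite_induct) auto

global_interpretation ga: vector_space "ga_scale :: 'a::field \<Rightarrow> ('g \<Rightarrow> 'a) \<Rightarrow> 'g \<Rightarrow> 'a"
  by unfold_locales (simp_all add: ga_scale_def fun_eq_iff algebra_simps)

global_interpretation ga_pair: vector_space_pair
  "ga_scale :: 'a::field \<Rightarrow> ('g \<Rightarrow> 'a) \<Rightarrow> 'g \<Rightarrow> 'a" ga_scale ..

definition ga_of :: "'g \<Rightarrow> 'g \<Rightarrow> 'a::field" where
  "ga_of g = (\<lambda>z. if z = g then 1 else 0)"

lemma group_algebra_carrier:
  "f \<in> carrier (group_algebra G) \<longleftrightarrow> (\<forall>z. z \<notin> carrier G \<longrightarrow> f z = 0)"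
  by (simp add: group_algebra_def)

lemma group_algebra_add [simp]: "ring.add (group_algebra G) = (+)"
  by (simp add: group_algebra_def fun_eq_iff)

lemma group_algebra_zero [simp]: "ring.zero (group_algebra G) = 0"
  by (simp add: group_algebra_def fun_eq_iff)

lemma group_algebra_one [simp]: "monoid.one (group_algebra G) = ga_of \<one>\<^bsub>G\<^esub>"
  by (simp add: group_algebra_def ga_of_def fun_eq_iff)

locale finite_group = group G for G :: "('g, 'n) monoid_scheme" (structure) +
  assumes finite_carrier: "finite (carrier G)"
begin

abbreviation FG :: "('g \<Rightarrow> 'a::field) ring" where
  "FG \<equiv> group_algebra G"

lemma mult_FG_apply:
  "z \<in> carrier G \<Longrightarrow> (f \<otimes>\<^bsub>FG\<^esub> h) z = (\<Sum>u\<in>carrier G. f u * h (inv u \<otimes> z))"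
  by (simp add: group_algebra_def)

lemma mult_FG_outside: "z \<notin> carrier G \<Longrightarrow> (f \<otimes>\<^bsub>FG\<^esub> h) z = 0"
  by (simp add: group_algebra_def)

lemma mult_FG_closed [simp]: "f \<otimes>\<^bsub>FG\<^esub> h \<in> carrier FG"
  by (simp add: group_algebra_carrier mult_FG_outside)

lemma carrier_FG_closed [simp]:
  "0 \<in> carrier FG"
  "f \<in> carrier FG \<Longrightarrow> h \<in> carrier FG \<Longrightarrow> f + h \<in> carrier FG"
  "f \<in> carrier FG \<Longrightarrow> h \<in> carrier FG \<Longrightarrow> f - h \<in> carrier FG"
  "f \<in> carrier FG \<Longrightarrow> - f \<in> carrier FG"
  "f \<in> carrier FG \<Longrightarrow> ga_scale c f \<in> carrier FG"
  "g \<in> carrier G \<Longrightarrow> ga_of g \<in> carrier FG"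
  by (auto simp: group_algebra_carrier ga_scale_def ga_of_def)

lemma sum_carrier_FG [simp]:
  "(\<And>i. i \<in> I \<Longrightarrow> f i \<in> carrier FG) \<Longrightarrow> (\<Sum>i\<in>I. f i) \<in> carrier FG"
  by (induction I rule: infinite_finite_induct) auto

lemma sum_reindex_mult_left:
  "a \<in> carrier G \<Longrightarrow> (\<Sum>w\<in>carrier G. f (a \<otimes> w)) = (\<Sum>w\<in>carrier G. f w)"
  by (rule sum.reindex_bij_betw)
    (rule bij_betwI[where g="\<lambda>u. inv a \<otimes> u"]; simp add: m_assoc[symmetric])

lemma sum_reindex_inv_mult:
  "z \<in> carrier G \<Longrightarrow> (\<Sum>w\<in>carrier G. f (inv w \<otimes> z)) = (\<Sum>w\<in>carrier G. f w)"
  by (rule sum.reindex_bij_betw, rule bij_betwI[where g="\<lambda>u. z \<otimes> inv u"])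
    (simp_all add: inv_mult_group m_assoc[symmetric], simp add: m_assoc)

lemma mult_FG_assoc: "f \<otimes>\<^bsub>FG\<^esub> h \<otimes>\<^bsub>FG\<^esub> k = f \<otimes>\<^bsub>FG\<^esub> (h \<otimes>\<^bsub>FG\<^esub> k)"
proof
  fix z show "(f \<otimes>\<^bsub>FG\<^esub> h \<otimes>\<^bsub>FG\<^esub> k) z = (f \<otimes>\<^bsub>FG\<^esub> (h \<otimes>\<^bsub>FG\<^esub> k)) z"
  proof (cases "z \<in> carrier G")
    case z: True
    have "(f \<otimes>\<^bsub>FG\<^esub> h \<otimes>\<^bsub>FG\<^esub> k) z
        = (\<Sum>u\<in>carrier G. (\<Sum>v\<in>carrier G. f v * h (inv v \<otimes> u)) * k (inv u \<otimes> z))"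
      using z by (simp add: mult_FG_apply)
    also have "\<dots> = (\<Sum>v\<in>carrier G. f v * (\<Sum>u\<in>carrier G. h (inv v \<otimes> u) * k (inv u \<otimes> z)))"
      unfolding sum_distrib_right sum_distrib_left mult.assoc by (rule sum.swap)
    also have "\<dots> = (\<Sum>v\<in>carrier G. f v * (\<Sum>w\<in>carrier G. h w * k (inv w \<otimes> (inv v \<otimes> z))))"
    proof (rule sum.cong[OF refl])
      fix v assume v: "v \<in> carrier G"
      have "(\<Sum>u\<in>carrier G. h (inv v \<otimes> u) * k (inv u \<otimes> z))
          = (\<Sum>w\<in>carrier G. h w * k (inv w \<otimes> (inv v \<otimes> z)))"
        using sum_reindex_mult_left[OF v, of "\<lambda>u. h (inv v \<otimes> u) * k (inv u \<otimes> z)"] v z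
        by (simp add: inv_mult_group m_assoc[symmetric])
      then show "f v * (\<Sum>u\<in>carrier G. h (inv v \<otimes> u) * k (inv u \<otimes> z))
          = f v * (\<Sum>w\<in>carrier G. h w * k (inv w \<otimes> (inv v \<otimes> z)))"
        by simp
    qed
    also have "\<dots> = (f \<otimes>\<^bsub>FG\<^esub> (h \<otimes>\<^bsub>FG\<^esub> k)) z"
      using z by (simp add: mult_FG_apply)
    finally show ?thesis .
  qed (simp add: mult_FG_outside)
qed

lemma mult_FG_distrib:
  "(f + h) \<otimes>\<^bsub>FG\<^esub> k = f \<otimes>\<^bsub>FG\<^esub> k + h \<otimes>\<^bsub>FG\<^esub> k"
  "k \<otimes>\<^bsub>FG\<^esub> (f + h) = k \<otimes>\<^bsub>FG\<^esub> f + k \<otimes>\<^bsub>FG\<^esub> h"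
  "(f - h) \<otimes>\<^bsub>FG\<^esub> k = f \<otimes>\<^bsub>FG\<^esub> k - h \<otimes>\<^bsub>FG\<^esub> k"
  "k \<otimes>\<^bsub>FG\<^esub> (f - h) = k \<otimes>\<^bsub>FG\<^esub> f - k \<otimes>\<^bsub>FG\<^esub> h"
  by (simp_all add: group_algebra_def fun_eq_iff algebra_simps sum.distrib sum_subtractf)

lemma mult_FG_zero [simp]:
  "0 \<otimes>\<^bsub>FG\<^esub> f = 0" "f \<otimes>\<^bsub>FG\<^esub> 0 = 0"
  by (simp_all add: group_algebra_def fun_eq_iff)

lemma mult_FG_scale:
  "ga_scale c f \<otimes>\<^bsub>FG\<^esub> h = ga_scale c (f \<otimes>\<^bsub>FG\<^esub> h)"
  "h \<otimes>\<^bsub>FG\<^esub> ga_scale c f = ga_scale c (h \<otimes>\<^bsub>FG\<^esub> f)"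
  by (simp_all add: group_algebra_def fun_eq_iff ga_scale_def sum_distrib_left mult_ac)

lemma mult_FG_sum:
  "(\<Sum>i\<in>I. f i) \<otimes>\<^bsub>FG\<^esub> h = (\<Sum>i\<in>I. f i \<otimes>\<^bsub>FG\<^esub> h)"
  "h \<otimes>\<^bsub>FG\<^esub> (\<Sum>i\<in>I. f i) = (\<Sum>i\<in>I. h \<otimes>\<^bsub>FG\<^esub> f i)"
  by (induction I rule: infinite_finite_induct) (simp_all add: mult_FG_distrib)

lemma sum_ga_of:
  "(\<Sum>u\<in>carrier G. f u * ga_of g u) = (if g \<in> carrier G then f g else 0)"
  using finite_carrier by (simp add: ga_of_def if_distrib cong: if_cong)

lemma ga_of_mult_left:
  "g \<in> carrier G \<Longrightarrow> ga_of g \<otimes>\<^bsub>FG\<^esub> f = (\<lambda>z. if z \<in> carrier G then f (inv g \<otimes> z) else 0)"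
  using sum_ga_of[of "\<lambda>u. f (inv u \<otimes> _)"]
  by (simp add: group_algebra_def fun_eq_iff mult.commute)


lemma ga_of_mult_right:
  assumes g: "g \<in> carrier G"
  shows "f \<otimes>\<^bsub>FG\<^esub> ga_of g = (\<lambda>z. if z \<in> carrier G then f (z \<otimes> inv g) else 0)"
proof
  fix z
  show "(f \<otimes>\<^bsub>FG\<^esub> ga_of g) z = (if z \<in> carrier G then f (z \<otimes> inv g) else 0)"
  proof (cases "z \<in> carrier G")
    case z: True
    have eq: "ga_of g (inv u \<otimes> z) = ga_of (z \<otimes> inv g) u" if u: "u \<in> carrier G" for u
    proof -
      have "inv u \<otimes> z = g \<longleftrightarrow> u = z \<otimes> inv g"
        using u g z by (metis inv_solve_left inv_solve_right)
      then show ?thesis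
        by (simp add: ga_of_def)
    qed
    have "(\<Sum>u\<in>carrier G. f u * ga_of g (inv u \<otimes> z))
        = (\<Sum>u\<in>carrier G. f u * ga_of (z \<otimes> inv g) u)"
      by (rule sum.cong[OF refl]) (simp only: eq)
    then show ?thesis
      using z g by (simp add: mult_FG_apply sum_ga_of)
  qed (simp add: mult_FG_outside)
qed

lemma ga_of_mult:
  assumes g: "g \<in> carrier G" and h: "h \<in> carrier G"
  shows "ga_of g \<otimes>\<^bsub>FG\<^esub> ga_of h = ga_of (g \<otimes> h)"
proof -
  have "h = inv g \<otimes> z \<longleftrightarrow> z = g \<otimes> h" if "z \<in> carrier G" for z
    using inv_solve_left[OF h g that] .
  then have "(\<lambda>z. if z \<in> carrier G then ga_of h (inv g \<otimes> z) else 0) = ga_of (g \<otimes> h)"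
    using g h by (auto simp: ga_of_def fun_eq_iff m_assoc[symmetric])
  then show ?thesis
    unfolding ga_of_mult_left[OF g] .
qed

lemma mult_FG_one:
  "f \<in> carrier FG \<Longrightarrow> ga_of \<one> \<otimes>\<^bsub>FG\<^esub> f = f"
  "f \<in> carrier FG \<Longrightarrow> f \<otimes>\<^bsub>FG\<^esub> ga_of \<one> = f"
  by (auto simp: ga_of_mult_left ga_of_mult_right group_algebra_carrier fun_eq_iff)

lemma ga_of_expansion: "f \<in> carrier FG \<Longrightarrow> f = (\<Sum>h\<in>carrier G. ga_scale (f h) (ga_of h))"
proof
  fix z assume f: "f \<in> carrier FG"
  have "(\<Sum>h\<in>carrier G. ga_scale (f h) (ga_of h)) z = (\<Sum>h\<in>carrier G. f h * ga_of z h)"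
    by (simp add: sum_fun_apply ga_scale_def ga_of_def eq_commute)
  also have "\<dots> = f z"
    using f by (simp add: sum_ga_of group_algebra_carrier)
  finally show "f z = (\<Sum>h\<in>carrier G. ga_scale (f h) (ga_of h)) z" ..
qed

lemma group_algebra_ring: "ring (FG :: ('g \<Rightarrow> 'a::field) ring)"
proof (rule ringI)
  show "abelian_group (FG :: ('g \<Rightarrow> 'a) ring)"
  proof (rule abelian_groupI)
    fix f :: "'g \<Rightarrow> 'a" assume "f \<in> carrier FG"
    then show "\<exists>h\<in>carrier FG. h \<oplus>\<^bsub>FG\<^esub> f = \<zero>\<^bsub>FG\<^esub>"
      by (intro bexI[of _ "- f"]) simp_all
  qed (simp_all add: add_ac)
  show "monoid (FG :: ('g \<Rightarrow> 'a) ring)"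
    by (rule monoidI) (simp_all add: mult_FG_assoc mult_FG_one)
qed (simp_all add: mult_FG_distrib)

lemma ga_scale_eq_mult: "f \<in> carrier FG \<Longrightarrow> ga_scale c f = ga_scale c (ga_of \<one>) \<otimes>\<^bsub>FG\<^esub> f"
  by (simp add: mult_FG_scale mult_FG_one)

lemma finite_carrier_FG:
  assumes "finite (UNIV :: 'a set)"
  shows "finite (carrier FG :: ('g \<Rightarrow> 'a::field) set)"
proof (rule inj_on_finite)
  show "inj_on (\<lambda>f. restrict f (carrier G)) (carrier FG :: ('g \<Rightarrow> 'a) set)"
    by (auto simp: inj_on_def group_algebra_carrier restrict_def fun_eq_iff) metis
  show "finite (\<Pi>\<^sub>E z \<in> carrier G. (UNIV :: 'a set))"
    using finite_carrier assms by (intro finite_PiE) auto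
qed auto

lemma left_ideal_subspace:
  assumes "left_ideal (FG :: ('g \<Rightarrow> 'a::field) ring) I"
  shows "ga.subspace I"
proof -
  interpret ring "FG :: ('g \<Rightarrow> 'a) ring"
    by (rule group_algebra_ring)
  show ?thesis
  proof (rule ga.subspaceI)
    show "0 \<in> I" "\<And>f h. f \<in> I \<Longrightarrow> h \<in> I \<Longrightarrow> f + h \<in> I"
      using left_ideal_zero[OF assms] left_ideal_add[OF assms] by auto
    show "ga_scale c f \<in> I" if "f \<in> I" for c f
    proof -
      have "ga_scale c (ga_of \<one>) \<otimes>\<^bsub>FG\<^esub> f \<in> I"
        using left_ideal_mult[OF assms _ that] by simp
      then show ?thesis
        using that left_ideal_subset[OF assms] ga_scale_eq_mult[of f c] by auto
    qed
  qed
qed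

lemma linear_equivariant_mult:
  assumes lin: "Vector_Spaces.linear ga_scale ga_scale \<phi>"
    and equiv: "\<And>h v. h \<in> carrier G \<Longrightarrow> \<phi> (ga_of h \<otimes>\<^bsub>FG\<^esub> v) = ga_of h \<otimes>\<^bsub>FG\<^esub> \<phi> v"
    and w: "w \<in> carrier FG"
  shows "\<phi> (w \<otimes>\<^bsub>FG\<^esub> v) = w \<otimes>\<^bsub>FG\<^esub> (\<phi> v :: 'g \<Rightarrow> 'a::field)"
proof -
  have "\<phi> (w \<otimes>\<^bsub>FG\<^esub> v) = \<phi> (\<Sum>h\<in>carrier G. ga_scale (w h) (ga_of h \<otimes>\<^bsub>FG\<^esub> v))"
    by (subst ga_of_expansion[OF w]) (simp add: mult_FG_sum mult_FG_scale)
  also have "\<dots> = (\<Sum>h\<in>carrier G. ga_scale (w h) (ga_of h \<otimes>\<^bsub>FG\<^esub> \<phi> v))"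
    by (simp add: ga_pair.linear_sum[OF lin] ga_pair.linear_scale[OF lin] equiv)
  also have "\<dots> = w \<otimes>\<^bsub>FG\<^esub> \<phi> v"
    by (subst (2) ga_of_expansion[OF w]) (simp add: mult_FG_sum mult_FG_scale)
  finally show ?thesis .
qed

end

section \<open>Relative traces\<close>

text \<open>Gaschuetz's averaging of a linear map \<open>p\<close>; for \<open>p = id\<close> it is left multiplication by
  the relative trace \<open>\<Sum>g. g d g\<^sup>-\<^sup>1\<close> of \<open>d\<close>.\<close>

definition trace_map ::
  "('g, 'n) monoid_scheme \<Rightarrow> ('g \<Rightarrow> 'a::field) \<Rightarrow> (('g \<Rightarrow> 'a) \<Rightarrow> 'g \<Rightarrow> 'a) \<Rightarrow> ('g \<Rightarrow> 'a) \<Rightarrow> 'g \<Rightarrow> 'a"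
where
  "trace_map G d p v = (\<Sum>g\<in>carrier G.
     ga_of g \<otimes>\<^bsub>group_algebra G\<^esub> d \<otimes>\<^bsub>group_algebra G\<^esub> p (ga_of (inv\<^bsub>G\<^esub> g) \<otimes>\<^bsub>group_algebra G\<^esub> v))"

context finite_group
begin

lemma trace_map_equivariant:
  assumes h: "h \<in> carrier G"
  shows "trace_map G d p (ga_of h \<otimes>\<^bsub>FG\<^esub> v) = ga_of h \<otimes>\<^bsub>FG\<^esub> trace_map G d p v"
proof -
  have shift: "ga_of (h \<otimes> g) \<otimes>\<^bsub>FG\<^esub> d \<otimes>\<^bsub>FG\<^esub> p (ga_of (inv (h \<otimes> g)) \<otimes>\<^bsub>FG\<^esub> (ga_of h \<otimes>\<^bsub>FG\<^esub> v))
      = ga_of h \<otimes>\<^bsub>FG\<^esub> (ga_of g \<otimes>\<^bsub>FG\<^esub> d \<otimes>\<^bsub>FG\<^esub> p (ga_of (inv g) \<otimes>\<^bsub>FG\<^esub> v))"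
    if g: "g \<in> carrier G" for g
  proof -
    have "ga_of (inv (h \<otimes> g)) \<otimes>\<^bsub>FG\<^esub> (ga_of h \<otimes>\<^bsub>FG\<^esub> v) = ga_of (inv g) \<otimes>\<^bsub>FG\<^esub> v"
      using g h by (simp flip: mult_FG_assoc add: ga_of_mult inv_mult_group m_assoc)
    then show ?thesis
      using g h by (simp flip: ga_of_mult add: mult_FG_assoc)
  qed
  have "trace_map G d p (ga_of h \<otimes>\<^bsub>FG\<^esub> v) = (\<Sum>g\<in>carrier G.
      ga_of (h \<otimes> g) \<otimes>\<^bsub>FG\<^esub> d \<otimes>\<^bsub>FG\<^esub> p (ga_of (inv (h \<otimes> g)) \<otimes>\<^bsub>FG\<^esub> (ga_of h \<otimes>\<^bsub>FG\<^esub> v)))"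
    unfolding trace_map_def by (rule sum_reindex_mult_left[OF h, symmetric])
  also have "\<dots> = ga_of h \<otimes>\<^bsub>FG\<^esub> trace_map G d p v"
    by (simp add: shift trace_map_def mult_FG_sum)
  finally show ?thesis .
qed

lemma trace_map_linear:
  assumes p: "Vector_Spaces.linear ga_scale ga_scale p"
  shows "Vector_Spaces.linear ga_scale ga_scale (trace_map G d p)"
  unfolding Vector_Spaces.linear_iff
proof (intro conjI allI ga.vector_space_axioms)
  show "trace_map G d p (v + w) = trace_map G d p v + trace_map G d p w" for v w
    by (simp add: trace_map_def mult_FG_distrib ga_pair.linear_add[OF p] sum.distrib)
  show "trace_map G d p (ga_scale c v) = ga_scale c (trace_map G d p v)" for c v
    by (simp add: trace_map_def mult_FG_scale ga_pair.linear_scale[OF p] ga.scale_sum_right)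
qed

lemma trace_map_mult:
  assumes "Vector_Spaces.linear ga_scale ga_scale p" and "w \<in> carrier FG"
  shows "trace_map G d p (w \<otimes>\<^bsub>FG\<^esub> v) = w \<otimes>\<^bsub>FG\<^esub> trace_map G d p v"
  by (rule linear_equivariant_mult[OF trace_map_linear[OF assms(1)] trace_map_equivariant assms(2)])

lemma trace_map_id:
  "trace_map G d id v = (\<Sum>g\<in>carrier G. ga_of g \<otimes>\<^bsub>FG\<^esub> d \<otimes>\<^bsub>FG\<^esub> ga_of (inv g)) \<otimes>\<^bsub>FG\<^esub> v"
  by (simp add: trace_map_def mult_FG_sum mult_FG_assoc)

lemma conj_ga_of_apply:
  assumes "g \<in> carrier G" and "z \<in> carrier G"
  shows "(ga_of g \<otimes>\<^bsub>FG\<^esub> d \<otimes>\<^bsub>FG\<^esub> ga_of (inv g)) z = d (inv g \<otimes> (z \<otimes> g))"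
  using assms by (simp add: ga_of_mult_left ga_of_mult_right)

lemma trace_central:
  assumes "w \<in> carrier FG"
  shows "(\<Sum>g\<in>carrier G. ga_of g \<otimes>\<^bsub>FG\<^esub> d \<otimes>\<^bsub>FG\<^esub> ga_of (inv g)) \<otimes>\<^bsub>FG\<^esub> w
       = w \<otimes>\<^bsub>FG\<^esub> (\<Sum>g\<in>carrier G. ga_of g \<otimes>\<^bsub>FG\<^esub> d \<otimes>\<^bsub>FG\<^esub> ga_of (inv g))"
  using trace_map_mult[OF ga.linear_id assms, of d "ga_of \<one>"] assms
  by (simp add: trace_map_id mult_FG_one)

lemma trace_map_in_left_ideal:
  assumes I: "left_ideal FG I" and p: "range p \<subseteq> I"
  shows "trace_map G d p v \<in> (I :: ('g \<Rightarrow> 'a::field) set)"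
proof -
  interpret R: ring "FG :: ('g \<Rightarrow> 'a) ring"
    by (rule group_algebra_ring)
  show ?thesis
    unfolding trace_map_def using p
    by (intro ga.subspace_sum[OF left_ideal_subspace[OF I]] R.left_ideal_mult[OF I]) auto
qed

lemma mult_trace_map_projection:
  assumes I: "left_ideal FG I" and p: "Vector_Spaces.linear ga_scale ga_scale p"
    and p_id: "\<And>v. v \<in> I \<Longrightarrow> p v = v" and w: "w \<in> (I :: ('g \<Rightarrow> 'a::field) set)"
  shows "w \<otimes>\<^bsub>FG\<^esub> trace_map G d p (ga_of \<one>)
       = (\<Sum>g\<in>carrier G. ga_of g \<otimes>\<^bsub>FG\<^esub> d \<otimes>\<^bsub>FG\<^esub> ga_of (inv g)) \<otimes>\<^bsub>FG\<^esub> w"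
proof -
  interpret R: ring "FG :: ('g \<Rightarrow> 'a) ring"
    by (rule group_algebra_ring)
  have wG: "w \<in> carrier FG"
    using w R.left_ideal_subset[OF I] by blast
  have "w \<otimes>\<^bsub>FG\<^esub> trace_map G d p (ga_of \<one>) = trace_map G d p w"
    using trace_map_mult[OF p wG, of d "ga_of \<one>"] wG by (simp add: mult_FG_one)
  also have "\<dots> = trace_map G d id w"
    unfolding trace_map_def using w R.left_ideal_mult[OF I]
    by (intro sum.cong refl arg_cong[where f="\<lambda>x. _ \<otimes>\<^bsub>FG\<^esub> x"]) (simp add: p_id)
  finally show ?thesis
    by (simp add: trace_map_id)
qed

text \<open>Averaging a linear projection onto \<open>J\<close> gives \<open>l \<in> J\<close> with \<open>w l = c w\<close> for \<open>w \<in> J\<close>; then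
  \<open>c l\<close> is an idempotent in \<open>J\<close>, hence \<open>0\<close>, and \<open>c a = a (c l)\<close>.\<close>

lemma trace_idempotent_annihilates_jacobson_radical:
  fixes d :: "'g \<Rightarrow> 'a::field"
  assumes fin: "finite (UNIV :: 'a set)"
    and c: "c = (\<Sum>g\<in>carrier G. ga_of g \<otimes>\<^bsub>FG\<^esub> d \<otimes>\<^bsub>FG\<^esub> ga_of (inv g))"
    and idem: "c \<otimes>\<^bsub>FG\<^esub> c = c"
    and a: "a \<in> jacobson_radical FG"
  shows "c \<otimes>\<^bsub>FG\<^esub> a = 0"
proof -
  interpret R: ring "FG :: ('g \<Rightarrow> 'a) ring"
    by (rule group_algebra_ring)
  let ?J = "jacobson_radical FG :: ('g \<Rightarrow> 'a) set"
  have J: "left_ideal FG ?J"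
    by (rule R.jacobson_radical_left_ideal)
  obtain p where p: "Vector_Spaces.linear ga_scale ga_scale p" "range p = ?J"
    and p_id: "\<And>v. v \<in> ?J \<Longrightarrow> p v = v"
    using ga.exists_linear_projection[OF left_ideal_subspace[OF J]] by blast
  define l where "l = trace_map G d p (ga_of \<one>)"
  have l: "l \<in> ?J"
    unfolding l_def using trace_map_in_left_ideal[OF J] p(2) by blast
  have avg: "w \<otimes>\<^bsub>FG\<^esub> l = c \<otimes>\<^bsub>FG\<^esub> w" if "w \<in> ?J" for w
    unfolding l_def c by (rule mult_trace_map_projection[OF J p(1) p_id that])
  have central: "c \<otimes>\<^bsub>FG\<^esub> w = w \<otimes>\<^bsub>FG\<^esub> c" if "w \<in> carrier FG" for w
    unfolding c by (rule trace_central[OF that])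
  have lG: "l \<in> carrier FG" and aG: "a \<in> carrier FG"
    using l a R.left_ideal_subset[OF J] by blast+
  have "c \<otimes>\<^bsub>FG\<^esub> l \<otimes>\<^bsub>FG\<^esub> (c \<otimes>\<^bsub>FG\<^esub> l) = c \<otimes>\<^bsub>FG\<^esub> (l \<otimes>\<^bsub>FG\<^esub> c) \<otimes>\<^bsub>FG\<^esub> l"
    by (simp add: mult_FG_assoc)
  also have "\<dots> = c \<otimes>\<^bsub>FG\<^esub> c \<otimes>\<^bsub>FG\<^esub> (l \<otimes>\<^bsub>FG\<^esub> l)"
    by (simp add: central[OF lG, symmetric] mult_FG_assoc)
  also have "\<dots> = c \<otimes>\<^bsub>FG\<^esub> l"
    using idem avg[OF l] by (simp flip: mult_FG_assoc)
  finally have cl: "c \<otimes>\<^bsub>FG\<^esub> l = \<zero>\<^bsub>FG\<^esub>"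
    by (intro R.jacobson_radical_idempotent_eq_zero[OF finite_carrier_FG[OF fin]]
        R.left_ideal_mult[OF J _ l]) (simp_all add: c)
  have "c \<otimes>\<^bsub>FG\<^esub> a = c \<otimes>\<^bsub>FG\<^esub> (a \<otimes>\<^bsub>FG\<^esub> l)"
    using avg[OF a] idem by (simp flip: mult_FG_assoc)
  also have "\<dots> = a \<otimes>\<^bsub>FG\<^esub> (c \<otimes>\<^bsub>FG\<^esub> l)"
    using central[OF aG] by (simp flip: mult_FG_assoc)
  finally show ?thesis
    using cl by simp
qed

end

context group
begin

lemma inv_mult_cancel_left [simp]: "x \<in> carrier G \<Longrightarrow> y \<in> carrier G \<Longrightarrow> inv x \<otimes> (x \<otimes> y) = y"
  by (simp add: m_assoc[symmetric])

lemma mult_inv_cancel_left [simp]: "x \<in> carrier G \<Longrightarrow> y \<in> carrier G \<Longrightarrow> x \<otimes> (inv x \<otimes> y) = y"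
  by (simp add: m_assoc[symmetric])

lemma subgroup_mult_left_mem_iff:
  assumes H: "subgroup H G" and h: "h \<in> H" and x: "x \<in> carrier G"
  shows "h \<otimes> x \<in> H \<longleftrightarrow> x \<in> H"
proof
  assume "h \<otimes> x \<in> H"
  then have "inv h \<otimes> (h \<otimes> x) \<in> H"
    by (rule subgroup.m_closed[OF H subgroup.m_inv_closed[OF H h]])
  with subgroup.mem_carrier[OF H h] x show "x \<in> H"
    by simp
qed (rule subgroup.m_closed[OF H h])

end

definition augmentation :: "('g, 'n) monoid_scheme \<Rightarrow> ('g \<Rightarrow> 'a::field) \<Rightarrow> 'a" where
  "augmentation G f = (\<Sum>g\<in>carrier G. f g)"

definition ga_indicator :: "'g set \<Rightarrow> 'g \<Rightarrow> 'a::field" where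
  "ga_indicator A = (\<lambda>z. if z \<in> A then 1 else 0)"

definition coset_invariant :: "('g, 'n) monoid_scheme \<Rightarrow> 'g set \<Rightarrow> ('g \<Rightarrow> 'a) \<Rightarrow> bool" where
  "coset_invariant G N f \<longleftrightarrow> (\<forall>n\<in>N. \<forall>g\<in>carrier G. f (n \<otimes>\<^bsub>G\<^esub> g) = f g)"

definition coset_augmentation_ideal :: "('g, 'n) monoid_scheme \<Rightarrow> 'g set \<Rightarrow> ('g \<Rightarrow> 'a::field) set" where
  "coset_augmentation_ideal G N =
     {f \<in> carrier (group_algebra G). coset_invariant G N f \<and> augmentation G f = 0}"

context finite_group
begin

lemma augmentation_linear:
  "augmentation G (f + h) = augmentation G f + augmentation G h"
  "augmentation G (f - h) = augmentation G f - augmentation G h"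
  "augmentation G (ga_scale c f) = c * augmentation G f"
  "augmentation G 0 = 0"
  by (simp_all add: augmentation_def sum.distrib sum_subtractf ga_scale_def sum_distrib_left)

lemma augmentation_one: "augmentation G (ga_of \<one>) = (1 :: 'a::field)"
  using sum_ga_of[of "\<lambda>_. 1 :: 'a" \<one>] by (simp add: augmentation_def)

lemma augmentation_mult:
  "augmentation G (f \<otimes>\<^bsub>FG\<^esub> h) = augmentation G f * (augmentation G h :: 'a::field)"
proof -
  have "augmentation G (f \<otimes>\<^bsub>FG\<^esub> h) = (\<Sum>z\<in>carrier G. \<Sum>u\<in>carrier G. f u * h (inv u \<otimes> z))"
    by (simp add: augmentation_def mult_FG_apply)
  also have "\<dots> = (\<Sum>u\<in>carrier G. f u * (\<Sum>z\<in>carrier G. h (inv u \<otimes> z)))"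
    by (subst sum.swap) (simp add: sum_distrib_left)
  also have "\<dots> = (\<Sum>u\<in>carrier G. f u * augmentation G h)"
    by (intro sum.cong refl) (simp add: augmentation_def sum_reindex_mult_left)
  finally show ?thesis
    by (simp add: augmentation_def sum_distrib_right)
qed

lemma augmentation_ideal_maximal:
  "maximal_left_ideal (FG :: ('g \<Rightarrow> 'a::field) ring) {f \<in> carrier FG. augmentation G f = 0}"
  (is "maximal_left_ideal FG ?I")
proof -
  interpret R: ring "FG :: ('g \<Rightarrow> 'a) ring"
    by (rule group_algebra_ring)
  have I: "left_ideal FG ?I"
    by (rule R.left_idealI) (auto simp: augmentation_linear augmentation_mult)
  have "K = carrier FG" if K: "left_ideal FG K" and IK: "?I \<subseteq> K" and "\<not> K \<subseteq> ?I" for K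
  proof -
    obtain b where b: "b \<in> K" "augmentation G b \<noteq> 0"
      using R.left_ideal_subset[OF K] \<open>\<not> K \<subseteq> ?I\<close> by auto
    have "f \<in> K" if f: "f \<in> carrier FG" for f
    proof -
      define k where "k = augmentation G f / augmentation G b"
      have bG: "b \<in> carrier FG"
        using b R.left_ideal_subset[OF K] by blast
      have "ga_scale k b \<in> K"
        using R.left_ideal_mult[OF K _ b(1), of "ga_scale k (ga_of \<one>)"] ga_scale_eq_mult[OF bG] by simp
      moreover have "f - ga_scale k b \<in> K"
        using IK f bG b(2) by (auto simp: augmentation_linear k_def)
      ultimately show "f \<in> K"
        using R.left_ideal_add[OF K] by fastforce
    qed
    then show ?thesis
      using R.left_ideal_subset[OF K] by blast
  qed
  moreover have "ga_of \<one> \<notin> ?I"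
    by (simp add: augmentation_one)
  ultimately show ?thesis
    using I by (auto simp: maximal_left_ideal_def)
qed

lemma indicator_subgroup_mult_apply:
  assumes "subgroup N G" and z: "z \<in> carrier G"
  shows "(ga_indicator N \<otimes>\<^bsub>FG\<^esub> w) z = (\<Sum>u\<in>N. w (inv u \<otimes> z) :: 'a::field)"
proof -
  have "(ga_indicator N \<otimes>\<^bsub>FG\<^esub> w) z = (\<Sum>u\<in>carrier G \<inter> N. w (inv u \<otimes> z))"
    unfolding mult_FG_apply[OF z] sum.inter_restrict[OF finite_carrier]
    by (intro sum.cong refl) (simp add: ga_indicator_def)
  also have "carrier G \<inter> N = N"
    using subgroup.subset[OF assms(1)] by blast
  finally show ?thesis .
qed

lemma indicator_normal_central:
  assumes N: "N \<lhd> G"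
  shows "ga_indicator N \<otimes>\<^bsub>FG\<^esub> w = w \<otimes>\<^bsub>FG\<^esub> (ga_indicator N :: 'g \<Rightarrow> 'a::field)"
proof
  fix z
  show "(ga_indicator N \<otimes>\<^bsub>FG\<^esub> w) z = (w \<otimes>\<^bsub>FG\<^esub> ga_indicator N) z"
  proof (cases "z \<in> carrier G")
    case z: True
    have conj: "inv h \<otimes> z \<in> N \<longleftrightarrow> z \<otimes> inv h \<in> N" if h: "h \<in> carrier G" for h
    proof
      assume "inv h \<otimes> z \<in> N"
      then have "h \<otimes> (inv h \<otimes> z) \<otimes> inv h \<in> N"
        using normal.inv_op_closed2[OF N h] by blast
      then show "z \<otimes> inv h \<in> N"
        using h z by simp
    next
      assume "z \<otimes> inv h \<in> N"
      then have "inv h \<otimes> (z \<otimes> inv h) \<otimes> h \<in> N"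
        using normal.inv_op_closed1[OF N h] by blast
      then show "inv h \<otimes> z \<in> N"
        using h z by (simp add: m_assoc)
    qed
    have "(w \<otimes>\<^bsub>FG\<^esub> ga_indicator N) z = (\<Sum>h\<in>carrier G. ga_indicator N (z \<otimes> inv h) * w h)"
      using z conj by (simp add: mult_FG_apply ga_indicator_def mult.commute)
    also have "\<dots> = (\<Sum>u\<in>carrier G. ga_indicator N (z \<otimes> inv (inv u \<otimes> z)) * w (inv u \<otimes> z))"
      by (rule sum_reindex_inv_mult[OF z, symmetric])
    also have "\<dots> = (ga_indicator N \<otimes>\<^bsub>FG\<^esub> w) z"
      using z by (simp add: mult_FG_apply inv_mult_group m_assoc[symmetric])
    finally show ?thesis ..
  qed (simp add: mult_FG_outside)
qed

lemma coset_invariant_mult_indicator_normal: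
  assumes N: "N \<lhd> G"
  shows "coset_invariant G N (w \<otimes>\<^bsub>FG\<^esub> (ga_indicator N :: 'g \<Rightarrow> 'a::field))"
  unfolding coset_invariant_def
proof (intro ballI)
  fix n g assume n: "n \<in> N" and g: "g \<in> carrier G"
  have nG: "n \<in> carrier G"
    using n normal_imp_subgroup[OF N] subgroup.subset by blast
  have "ga_indicator N (inv u \<otimes> (n \<otimes> g)) = (ga_indicator N (inv u \<otimes> g) :: 'a)"
    if u: "u \<in> carrier G" for u
  proof -
    have "inv u \<otimes> (n \<otimes> g) = (inv u \<otimes> n \<otimes> u) \<otimes> (inv u \<otimes> g)"
      using u nG g by (simp add: m_assoc)
    then show ?thesis
      using subgroup_mult_left_mem_iff[OF normal_imp_subgroup[OF N] normal.inv_op_closed1[OF N u n]] u g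
      by (simp add: ga_indicator_def)
  qed
  then show "(w \<otimes>\<^bsub>FG\<^esub> ga_indicator N) (n \<otimes> g) = (w \<otimes>\<^bsub>FG\<^esub> ga_indicator N) g"
    using nG g by (simp add: mult_FG_apply)
qed

lemma indicator_subgroup_mult_coset_invariant:
  assumes N: "subgroup N G" and f: "f \<in> carrier FG" and inv: "coset_invariant G N f"
  shows "ga_indicator N \<otimes>\<^bsub>FG\<^esub> f = ga_scale (of_nat (card N)) (f :: 'g \<Rightarrow> 'a::field)"
proof
  fix z
  show "(ga_indicator N \<otimes>\<^bsub>FG\<^esub> f) z = ga_scale (of_nat (card N)) f z"
  proof (cases "z \<in> carrier G")
    case z: True
    have "f (inv u \<otimes> z) = f z" if "u \<in> N" for u
      using inv z that subgroup.m_inv_closed[OF N] by (simp add: coset_invariant_def)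
    then show ?thesis
      using z by (simp add: indicator_subgroup_mult_apply[OF N] ga_scale_def)
  qed (use f in \<open>simp add: mult_FG_outside group_algebra_carrier ga_scale_def\<close>)
qed

lemma ga_indicator_carrier: "A \<subseteq> carrier G \<Longrightarrow> ga_indicator A \<in> carrier FG"
  by (auto simp: group_algebra_carrier ga_indicator_def)

lemma mult_indicator_carrier_apply:
  assumes z: "z \<in> carrier G"
  shows "(f \<otimes>\<^bsub>FG\<^esub> ga_indicator (carrier G)) z = augmentation G (f :: 'g \<Rightarrow> 'a::field)"
    and "(ga_indicator (carrier G) \<otimes>\<^bsub>FG\<^esub> f) z = augmentation G f"
proof -
  show "(f \<otimes>\<^bsub>FG\<^esub> ga_indicator (carrier G)) z = augmentation G f"
    using z by (simp add: mult_FG_apply ga_indicator_def augmentation_def)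
  have "(ga_indicator (carrier G) \<otimes>\<^bsub>FG\<^esub> f) z = (\<Sum>u\<in>carrier G. f (inv u \<otimes> z))"
    using z by (simp add: mult_FG_apply ga_indicator_def)
  also have "\<dots> = augmentation G f"
    unfolding augmentation_def by (rule sum_reindex_inv_mult[OF z])
  finally show "(ga_indicator (carrier G) \<otimes>\<^bsub>FG\<^esub> f) z = augmentation G f" .
qed

end

section \<open>Frobenius groups with a complement of order 3\<close>

lemma (in group) subgroup_pow_card_eq_one:
  assumes "subgroup H G" and "h \<in> H"
  shows "h [^] card H = \<one>"
proof -
  interpret H: group "G\<lparr>carrier := H\<rparr>"
    using subgroup.subgroup_is_group[OF assms(1) is_group] .
  show ?thesis
    using H.pow_order_eq_1[of h] assms(2) by (simp add: order_def flip: nat_pow_consistent)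
qed

locale c3_frobenius = finite_group G for G :: "('g, 'n) monoid_scheme" (structure) +
  fixes N :: "'g set" and y :: 'g
  assumes N_normal: "N \<lhd> G"
    and N_comm: "\<And>a b. a \<in> N \<Longrightarrow> b \<in> N \<Longrightarrow> a \<otimes> b = b \<otimes> a"
    and y_closed [simp]: "y \<in> carrier G"
    and y_cube: "y \<otimes> y \<otimes> y = \<one>"
    and decomp: "bij_betw (\<lambda>(n, j). n \<otimes> y [^] j) (N \<times> {..<3::nat}) (carrier G)"
    and fixed_point_free: "\<And>n. n \<in> N \<Longrightarrow> inv y \<otimes> n \<otimes> y = n \<Longrightarrow> n = \<one>"
begin

lemma N_subgroup: "subgroup N G"
  by (rule normal_imp_subgroup[OF N_normal])

lemma N_closed [simp]:
  "n \<in> N \<Longrightarrow> n \<in> carrier G"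
  "\<one> \<in> N"
  "a \<in> N \<Longrightarrow> b \<in> N \<Longrightarrow> a \<otimes> b \<in> N"
  "a \<in> N \<Longrightarrow> inv a \<in> N"
  by (simp_all add: subgroup.mem_carrier[OF N_subgroup] subgroup.one_closed[OF N_subgroup]
      subgroup.m_closed[OF N_subgroup] subgroup.m_inv_closed[OF N_subgroup])

lemma N_conj_closed:
  "g \<in> carrier G \<Longrightarrow> n \<in> N \<Longrightarrow> inv g \<otimes> n \<otimes> g \<in> N"
  "g \<in> carrier G \<Longrightarrow> n \<in> N \<Longrightarrow> g \<otimes> n \<otimes> inv g \<in> N"
  using normal.inv_op_closed1[OF N_normal] normal.inv_op_closed2[OF N_normal] by blast+

lemma inv_y: "inv y = y \<otimes> y"
  using inv_equality[of "y \<otimes> y" y] y_cube by simp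

lemma inv_yy: "inv (y \<otimes> y) = y"
  using inv_equality[of y "y \<otimes> y"] y_cube by (simp add: m_assoc)

lemma carrier_cases:
  assumes "g \<in> carrier G"
  obtains n where "n \<in> N" and "g = n \<or> g = n \<otimes> y \<or> g = n \<otimes> (y \<otimes> y)"
proof -
  have "g \<in> (\<lambda>(n, j). n \<otimes> y [^] j) ` (N \<times> {..<3::nat})"
    using assms decomp by (simp add: bij_betw_def)
  then obtain n and j :: nat where "n \<in> N" "j < 3" "g = n \<otimes> y [^] j"
    by auto
  moreover have "y [^] j = \<one> \<or> y [^] j = y \<or> y [^] j = y \<otimes> y"
    using \<open>j < 3\<close> by (auto simp: less_Suc_eq numeral_3_eq_3 numeral_2_eq_2)
  ultimately show ?thesis
    using that by auto
qed

lemma y_notin_N: "y \<notin> N" and yy_notin_N: "y \<otimes> y \<notin> N"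
proof -
  have "n = n' \<and> j = j'"
    if "n \<in> N" "n' \<in> N" "j < 3" "j' < 3" "n \<otimes> y [^] j = n' \<otimes> y [^] j'" for n n' and j j' :: nat
    using that decomp by (auto simp: bij_betw_def inj_on_def)
  from this[of y \<one> 0 1] this[of "y \<otimes> y" \<one> 0 2] show "y \<notin> N" "y \<otimes> y \<notin> N"
    by (auto simp: numeral_2_eq_2)
qed

lemma sum_carrier_cosets:
  "(\<Sum>g\<in>carrier G. f g) = (\<Sum>n\<in>N. f n) + (\<Sum>n\<in>N. f (n \<otimes> y)) + (\<Sum>n\<in>N. f (n \<otimes> (y \<otimes> y)))"
proof -
  have "(\<Sum>g\<in>carrier G. f g) = (\<Sum>(n, j)\<in>N \<times> {..<3::nat}. f (n \<otimes> y [^] j))"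
    using sum.reindex_bij_betw[OF decomp, of f] by (simp add: case_prod_beta)
  also have "\<dots> = (\<Sum>n\<in>N. f n + f (n \<otimes> y) + f (n \<otimes> (y \<otimes> y)))"
    by (simp add: sum.cartesian_product[symmetric] numeral_3_eq_3 lessThan_Suc add_ac numeral_2_eq_2)
  finally show ?thesis
    by (simp add: sum.distrib)
qed

lemma N_conj_comm: "n \<in> N \<Longrightarrow> z \<in> N \<Longrightarrow> inv n \<otimes> z \<otimes> n = z"
  using N_comm[of "inv n" z] by (simp add: m_assoc)

lemma fixed_point_free_yy:
  assumes n: "n \<in> N" and fixed: "inv (y \<otimes> y) \<otimes> n \<otimes> (y \<otimes> y) = n"
  shows "n = \<one>"
proof -
  have "inv y \<otimes> n \<otimes> y = inv y \<otimes> (inv (y \<otimes> y) \<otimes> n \<otimes> (y \<otimes> y)) \<otimes> y"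
    using fixed by simp
  also have "\<dots> = inv (y \<otimes> y \<otimes> y) \<otimes> n \<otimes> (y \<otimes> y \<otimes> y)"
    using n by (simp add: m_assoc inv_mult_group)
  finally show ?thesis
    using fixed_point_free[OF n] y_cube n by simp
qed

lemma cube_outside_N:
  assumes z: "z \<in> carrier G" and zN: "z \<notin> N"
  shows "z \<otimes> z \<otimes> z = \<one>"
proof -
  obtain a h where a: "a \<in> N" and h: "h = y \<or> h = y \<otimes> y" and zh: "z = a \<otimes> h"
    using carrier_cases[OF z] zN by (metis N_closed(3) l_one one_closed r_one)
  have hG: "h \<in> carrier G"
    using h by auto
  have h_cube: "h \<otimes> h \<otimes> h = \<one>"
    using h y_cube by (auto simp: m_assoc)
  define c where "c = a \<otimes> (h \<otimes> a \<otimes> inv h) \<otimes> (h \<otimes> h \<otimes> a \<otimes> inv (h \<otimes> h))"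
  have c: "c \<in> N"
    unfolding c_def using a hG by (simp add: N_conj_closed)
  have "z \<otimes> z \<otimes> z = c \<otimes> (h \<otimes> h \<otimes> h)"
    unfolding zh c_def using a hG by (simp add: m_assoc inv_mult_group)
  then have zc: "z \<otimes> z \<otimes> z = c"
    using h_cube c by simp
  have "inv z \<otimes> c \<otimes> z = inv h \<otimes> (inv a \<otimes> c \<otimes> a) \<otimes> h"
    unfolding zh using a hG c by (simp add: m_assoc inv_mult_group)
  then have "inv h \<otimes> c \<otimes> h = inv z \<otimes> c \<otimes> z"
    using N_conj_comm[OF a c] by simp
  also have "\<dots> = c"
    unfolding zc[symmetric] using z by (simp add: m_assoc)
  finally have "inv h \<otimes> c \<otimes> h = c" .
  then have "c = \<one>"
    using h fixed_point_free[OF c] fixed_point_free_yy[OF c] by blast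
  with zc show ?thesis
    by simp
qed

lemma ord_power_of_3_iff:
  assumes N3: "\<not> 3 dvd card N" and z: "z \<in> carrier G"
  shows "(\<exists>k::nat. ord z = 3 ^ k) \<longleftrightarrow> z = \<one> \<or> z \<notin> N"
proof (cases "z \<in> N")
  case True
  have "ord z dvd card N"
    using subgroup_pow_card_eq_one[OF N_subgroup True] pow_eq_id[OF z] by simp
  then have k0: "ord z = 3 ^ k \<Longrightarrow> k = 0" for k
    using N3 by (metis dvd_power dvd_trans not_gr0)
  show ?thesis
  proof
    assume "\<exists>k. ord z = 3 ^ k"
    then have "ord z = 1"
      using k0 by force
    then show "z = \<one> \<or> z \<notin> N"
      using ord_eq_1[OF z] by simp
  next
    assume "z = \<one> \<or> z \<notin> N"
    then have "ord z = 3 ^ 0"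
      using True by simp
    then show "\<exists>k. ord z = 3 ^ k" ..
  qed
next
  case False
  have "z [^] (3::nat) = \<one>"
    using cube_outside_N[OF z False] z by (simp add: numeral_3_eq_3 m_assoc)
  then have dvd3: "ord z dvd 3"
    using pow_eq_id[OF z] by simp
  then have "ord z \<in> {1, 2, 3}"
    using dvd_imp_le[OF dvd3] by (cases "ord z = 0") auto
  moreover have "ord z \<noteq> 1"
    using False ord_eq_1[OF z] by auto
  ultimately have "ord z = 3 ^ 1"
    using dvd3 by auto
  then show ?thesis
    using False by blast
qed

abbreviation conj_y :: "'g \<Rightarrow> 'g" where
  "conj_y n \<equiv> inv y \<otimes> n \<otimes> y"

lemma conj_y_closed: "n \<in> N \<Longrightarrow> conj_y n \<in> N"
  by (simp add: N_conj_closed)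

lemma conj_y_cube:
  assumes n: "n \<in> N"
  shows "conj_y (conj_y (conj_y n)) = n"
proof -
  have "conj_y (conj_y (conj_y n)) = inv (y \<otimes> y \<otimes> y) \<otimes> n \<otimes> (y \<otimes> y \<otimes> y)"
    using n by (simp add: m_assoc inv_mult_group)
  with n y_cube show ?thesis
    by simp
qed

lemma conj_y_orbit_distinct:
  assumes z: "z \<in> N" and "z \<noteq> \<one>"
  shows "conj_y z \<noteq> z" and "conj_y (conj_y z) \<noteq> z" and "conj_y (conj_y z) \<noteq> conj_y z"
proof -
  show z1: "conj_y z \<noteq> z"
    using fixed_point_free[OF z] assms(2) by blast
  show "conj_y (conj_y z) \<noteq> conj_y z"
    using z1 z by simp
  show "conj_y (conj_y z) \<noteq> z"
    using z1 conj_y_cube[OF z] by metis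
qed

end

section \<open>The group algebra in characteristic 3\<close>

text \<open>The coefficients of \<open>(a\<^sub>0 + a\<^sub>1 y + a\<^sub>2 y\<^sup>2)\<^sup>3\<close> modulo \<open>y\<^sup>3 = 1\<close>: off the identity every monomial
  occurs with a multiplicity divisible by \<open>3\<close>, and the constant one is \<open>(a\<^sub>0 + a\<^sub>1 + a\<^sub>2)\<^sup>3\<close> up to
  a multiple of \<open>3\<close>.\<close>

lemma cube_coefficients_char_3:
  fixes a0 a1 a2 :: "'a::comm_ring_1"
  assumes three: "(3::'a) = 0" and sum: "a0 + a1 + a2 = 0"
  shows "a0 * (a0 * a0 + a1 * a2 + a2 * a1) + a1 * (a0 * a2 + a1 * a1 + a2 * a0)
           + a2 * (a0 * a1 + a1 * a0 + a2 * a2) = 0"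
    and "a0 * (a0 * a1 + a1 * a0 + a2 * a2) + a1 * (a0 * a0 + a1 * a2 + a2 * a1)
           + a2 * (a0 * a2 + a1 * a1 + a2 * a0) = 0"
    and "a0 * (a0 * a2 + a1 * a1 + a2 * a0) + a1 * (a0 * a1 + a1 * a0 + a2 * a2)
           + a2 * (a0 * a0 + a1 * a2 + a2 * a1) = 0"
proof -
  have "a0 * (a0 * a0 + a1 * a2 + a2 * a1) + a1 * (a0 * a2 + a1 * a1 + a2 * a0)
          + a2 * (a0 * a1 + a1 * a0 + a2 * a2)
      = (a0 + a1 + a2) ^ 3 - 3 * (a0 * a0 * a1 + a0 * a0 * a2 + a1 * a1 * a0
          + a1 * a1 * a2 + a2 * a2 * a0 + a2 * a2 * a1)"
    by (simp add: algebra_simps power3_eq_cube)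
  then show "a0 * (a0 * a0 + a1 * a2 + a2 * a1) + a1 * (a0 * a2 + a1 * a1 + a2 * a0)
               + a2 * (a0 * a1 + a1 * a0 + a2 * a2) = 0"
    using three sum by simp
  have "a0 * (a0 * a1 + a1 * a0 + a2 * a2) + a1 * (a0 * a0 + a1 * a2 + a2 * a1)
          + a2 * (a0 * a2 + a1 * a1 + a2 * a0) = 3 * (a0 * a0 * a1 + a0 * a2 * a2 + a1 * a1 * a2)"
    by (simp add: algebra_simps)
  then show "a0 * (a0 * a1 + a1 * a0 + a2 * a2) + a1 * (a0 * a0 + a1 * a2 + a2 * a1)
               + a2 * (a0 * a2 + a1 * a1 + a2 * a0) = 0"
    using three by simp
  have "a0 * (a0 * a2 + a1 * a1 + a2 * a0) + a1 * (a0 * a1 + a1 * a0 + a2 * a2)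
          + a2 * (a0 * a0 + a1 * a2 + a2 * a1) = 3 * (a0 * a0 * a2 + a0 * a1 * a1 + a1 * a2 * a2)"
    by (simp add: algebra_simps)
  then show "a0 * (a0 * a2 + a1 * a1 + a2 * a0) + a1 * (a0 * a1 + a1 * a0 + a2 * a2)
               + a2 * (a0 * a0 + a1 * a2 + a2 * a1) = 0"
    using three by simp
qed

locale c3_frobenius_algebra = c3_frobenius G N y
  for G :: "('g, 'n) monoid_scheme" (structure) and N y +
  fixes field :: "'a::field itself"
  assumes finite_field: "finite (UNIV :: 'a set)"
    and char_3: "CHAR('a) = 3"
    and card_N_mod_3: "card N mod 3 = 1"
begin

abbreviation e :: "'g \<Rightarrow> 'a" where
  "e \<equiv> ga_indicator N"

abbreviation V :: "('g \<Rightarrow> 'a) set" where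
  "V \<equiv> coset_augmentation_ideal G N"

lemma three_eq_zero: "(3::'a) = 0"
  using of_nat_CHAR[where 'a='a] char_3 by simp

lemma of_nat_card_N: "of_nat (card N) = (1::'a)"
proof -
  have "card N = 3 * (card N div 3) + 1"
    using card_N_mod_3 by (metis div_mult_mod_eq mult.commute)
  then have "(of_nat (card N) :: 'a) = 3 * of_nat (card N div 3) + 1"
    by (metis of_nat_1 of_nat_add of_nat_mult of_nat_numeral)
  then show ?thesis
    using three_eq_zero by simp
qed

lemma e_carrier [simp]: "e \<in> carrier FG"
  by (rule ga_indicator_carrier[OF subgroup.subset[OF N_subgroup]])

lemma coset_invariant_indicator_rcos:
  assumes g: "g \<in> carrier G"
  shows "coset_invariant G N (ga_indicator (N #> g) :: 'g \<Rightarrow> 'a)"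
proof -
  have "n \<otimes> z \<in> N #> g \<longleftrightarrow> z \<in> N #> g" if n: "n \<in> N" and z: "z \<in> carrier G" for n z
    using subgroup_mult_left_mem_iff[OF N_subgroup n, of "z \<otimes> inv g"] n z g
      subgroup.rcos_module[OF N_subgroup is_group g]
    by (simp add: m_assoc)
  then show ?thesis
    by (simp add: coset_invariant_def ga_indicator_def)
qed

lemma coset_invariant_e: "coset_invariant G N e"
  using coset_invariant_indicator_rcos[of \<one>] coset_mult_one[OF subgroup.subset[OF N_subgroup]]
  by simp

lemma e_central: "e \<otimes>\<^bsub>FG\<^esub> w = w \<otimes>\<^bsub>FG\<^esub> e"
  by (rule indicator_normal_central[OF N_normal])

lemma e_mult_coset_invariant:
  "f \<in> carrier FG \<Longrightarrow> coset_invariant G N f \<Longrightarrow> e \<otimes>\<^bsub>FG\<^esub> f = f"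
  by (simp add: indicator_subgroup_mult_coset_invariant[OF N_subgroup] of_nat_card_N
      ga_scale_def)

lemma coset_invariant_iff_e_mult:
  assumes "f \<in> carrier FG"
  shows "coset_invariant G N f \<longleftrightarrow> e \<otimes>\<^bsub>FG\<^esub> f = f"
  using assms e_mult_coset_invariant coset_invariant_mult_indicator_normal[OF N_normal, of f]
  by (metis e_central)

lemma e_idem: "e \<otimes>\<^bsub>FG\<^esub> e = e"
  by (rule e_mult_coset_invariant[OF e_carrier coset_invariant_e])

lemma V_left_ideal: "left_ideal FG V"
proof -
  interpret R: ring "FG :: ('g \<Rightarrow> 'a) ring"
    by (rule group_algebra_ring)
  show ?thesis
  proof (rule R.left_idealI)
    show "V \<subseteq> carrier FG" "\<zero>\<^bsub>FG\<^esub> \<in> V"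
      by (auto simp: coset_augmentation_ideal_def coset_invariant_def augmentation_linear)
    show "f \<oplus>\<^bsub>FG\<^esub> h \<in> V" if "f \<in> V" "h \<in> V" for f h
      using that by (simp add: coset_augmentation_ideal_def coset_invariant_def augmentation_linear)
    show "w \<otimes>\<^bsub>FG\<^esub> v \<in> V" if w: "w \<in> carrier FG" and v: "v \<in> V" for w v
    proof -
      have vG: "v \<in> carrier FG" and v_inv: "e \<otimes>\<^bsub>FG\<^esub> v = v" and v_aug: "augmentation G v = 0"
        using v coset_invariant_iff_e_mult by (auto simp: coset_augmentation_ideal_def)
      have "e \<otimes>\<^bsub>FG\<^esub> (w \<otimes>\<^bsub>FG\<^esub> v) = w \<otimes>\<^bsub>FG\<^esub> (e \<otimes>\<^bsub>FG\<^esub> v)"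
        by (simp flip: mult_FG_assoc add: e_central[of w])
      then show ?thesis
        using v_inv v_aug coset_invariant_iff_e_mult[of "w \<otimes>\<^bsub>FG\<^esub> v"]
        by (simp add: coset_augmentation_ideal_def augmentation_mult)
    qed
  qed
qed


lemma coset_invariant_right:
  assumes f: "coset_invariant G N f" and h: "h \<in> carrier G" and n: "n \<in> N" and z: "z \<in> carrier G"
  shows "f (h \<otimes> n \<otimes> z) = f (h \<otimes> z)"
proof -
  have "h \<otimes> n \<otimes> z = (h \<otimes> n \<otimes> inv h) \<otimes> (h \<otimes> z)"
    using h n z by (simp add: m_assoc)
  then show ?thesis
    using f N_conj_closed(2)[OF h n] h z by (simp add: coset_invariant_def)
qed

lemma coset_invariant_values:
  assumes f: "coset_invariant G N f" and z: "z \<in> carrier G"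
  shows "f z = f \<one> \<or> f z = f y \<or> f z = f (y \<otimes> y)"
proof -
  obtain n where n: "n \<in> N" "z = n \<or> z = n \<otimes> y \<or> z = n \<otimes> (y \<otimes> y)"
    using carrier_cases[OF z] by blast
  have "f n = f \<one>"
    using f n(1) by (metis N_closed(1) coset_invariant_def one_closed r_one)
  then show ?thesis
    using f n by (auto simp: coset_invariant_def)
qed

lemma coset_invariant_eq_zero:
  assumes "f \<in> carrier FG" and "coset_invariant G N f"
    and "f \<one> = 0" and "f y = 0" and "f (y \<otimes> y) = 0"
  shows "f = 0"
proof
  fix z
  show "f z = 0 z"
    using assms coset_invariant_values[of f z] by (cases "z \<in> carrier G") (auto simp: group_algebra_carrier)
qed

lemma augmentation_coset_invariant:
  assumes f: "coset_invariant G N (f :: 'g \<Rightarrow> 'a)"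
  shows "augmentation G f = f \<one> + f y + f (y \<otimes> y)"
proof -
  have "(\<Sum>n\<in>N. f (n \<otimes> h)) = f h" if "h \<in> carrier G" for h
    using f that of_nat_card_N by (simp add: coset_invariant_def)
  from this[of \<one>] this[of y] this[of "y \<otimes> y"] show ?thesis
    by (simp add: augmentation_def sum_carrier_cosets)
qed

lemma mult_coset_invariant_apply:
  assumes w: "coset_invariant G N (w :: 'g \<Rightarrow> 'a)" and v: "coset_invariant G N v"
    and z: "z \<in> carrier G"
  shows "(w \<otimes>\<^bsub>FG\<^esub> v) z = w \<one> * v z + w y * v (inv y \<otimes> z) + w (y \<otimes> y) * v (inv (y \<otimes> y) \<otimes> z)"
proof -
  have "w (n \<otimes> h) * v (inv (n \<otimes> h) \<otimes> z) = w h * v (inv h \<otimes> z)"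
    if n: "n \<in> N" and h: "h \<in> carrier G" for n h
  proof -
    have "v (inv (n \<otimes> h) \<otimes> z) = v (inv h \<otimes> z)"
      using coset_invariant_right[OF v _ N_closed(4)[OF n] z, of "inv h"] n h z
      by (simp add: inv_mult_group)
    moreover have "w (n \<otimes> h) = w h"
      using w n h by (simp add: coset_invariant_def)
    ultimately show ?thesis
      by simp
  qed
  from this[of _ \<one>] this[of _ y] this[of _ "y \<otimes> y"] show ?thesis
    using z of_nat_card_N by (simp add: mult_FG_apply sum_carrier_cosets)
qed

lemma V_cube: "v \<in> V \<Longrightarrow> v \<otimes>\<^bsub>FG\<^esub> (v \<otimes>\<^bsub>FG\<^esub> v) = 0"
proof -
  interpret R: ring "FG :: ('g \<Rightarrow> 'a) ring"
    by (rule group_algebra_ring)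
  assume v: "v \<in> V"
  have vG: "v \<in> carrier FG" and v_inv: "coset_invariant G N v"
    using v by (auto simp: coset_augmentation_ideal_def)
  have "v \<otimes>\<^bsub>FG\<^esub> v \<in> V" "v \<otimes>\<^bsub>FG\<^esub> (v \<otimes>\<^bsub>FG\<^esub> v) \<in> V"
    using R.left_ideal_mult[OF V_left_ideal vG] v by blast+
  then have vv_inv: "coset_invariant G N (v \<otimes>\<^bsub>FG\<^esub> v)"
    and vvv_inv: "coset_invariant G N (v \<otimes>\<^bsub>FG\<^esub> (v \<otimes>\<^bsub>FG\<^esub> v))"
    by (auto simp: coset_augmentation_ideal_def)
  define a0 a1 a2 where "a0 = v \<one>" and "a1 = v y" and "a2 = v (y \<otimes> y)"
  have sum: "a0 + a1 + a2 = 0"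
    using v augmentation_coset_invariant[OF v_inv]
    by (simp add: coset_augmentation_ideal_def a0_def a1_def a2_def)
  have y_simps: "inv y \<otimes> \<one> = y \<otimes> y" "inv (y \<otimes> y) \<otimes> \<one> = y" "inv y \<otimes> y = \<one>"
    "inv (y \<otimes> y) \<otimes> y = y \<otimes> y" "inv y \<otimes> (y \<otimes> y) = y" "inv (y \<otimes> y) \<otimes> (y \<otimes> y) = \<one>"
    using y_cube by (simp_all add: inv_y inv_yy m_assoc)
  note vv_apply = mult_coset_invariant_apply[OF v_inv v_inv]
  note vvv_apply = mult_coset_invariant_apply[OF v_inv vv_inv]
  show ?thesis
  proof (rule coset_invariant_eq_zero[OF _ vvv_inv])
    show "(v \<otimes>\<^bsub>FG\<^esub> (v \<otimes>\<^bsub>FG\<^esub> v)) \<one> = 0"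
      "(v \<otimes>\<^bsub>FG\<^esub> (v \<otimes>\<^bsub>FG\<^esub> v)) y = 0"
      "(v \<otimes>\<^bsub>FG\<^esub> (v \<otimes>\<^bsub>FG\<^esub> v)) (y \<otimes> y) = 0"
      using cube_coefficients_char_3[OF three_eq_zero sum]
      by (simp_all add: vvv_apply vv_apply y_simps a0_def a1_def a2_def)
  qed simp
qed


lemma trace_apply_N:
  assumes z: "z \<in> N"
  shows "(\<Sum>g\<in>carrier G. ga_of g \<otimes>\<^bsub>FG\<^esub> d \<otimes>\<^bsub>FG\<^esub> ga_of (inv g)) z
       = d z + d (conj_y z) + (d (conj_y (conj_y z)) :: 'a)"
proof -
  have "inv (n \<otimes> h) \<otimes> (z \<otimes> (n \<otimes> h)) = inv h \<otimes> z \<otimes> h" if n: "n \<in> N" and h: "h \<in> carrier G" for n h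
  proof -
    have "inv (n \<otimes> h) \<otimes> (z \<otimes> (n \<otimes> h)) = inv h \<otimes> (inv n \<otimes> z \<otimes> n) \<otimes> h"
      using n h z by (simp add: inv_mult_group m_assoc)
    then show ?thesis
      using N_conj_comm[OF n z] by simp
  qed
  then have "(\<Sum>n\<in>N. d (inv (n \<otimes> h) \<otimes> (z \<otimes> (n \<otimes> h)))) = d (inv h \<otimes> z \<otimes> h)"
    if "h \<in> carrier G" for h
    using that of_nat_card_N by simp
  note cosets = this[of \<one>] this[of y] this[of "y \<otimes> y"]
  have "(\<Sum>g\<in>carrier G. ga_of g \<otimes>\<^bsub>FG\<^esub> d \<otimes>\<^bsub>FG\<^esub> ga_of (inv g)) z
      = (\<Sum>g\<in>carrier G. d (inv g \<otimes> (z \<otimes> g)))"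
    using z by (simp add: sum_fun_apply conj_ga_of_apply)
  also have "\<dots> = d z + d (conj_y z) + d (conj_y (conj_y z))"
    using cosets z by (simp add: sum_carrier_cosets m_assoc inv_mult_group)
  finally show ?thesis .
qed

lemma trace_apply_outside_N:
  assumes d: "\<And>z. z \<notin> N \<Longrightarrow> d z = 0" and z: "z \<in> carrier G" "z \<notin> N"
  shows "(\<Sum>g\<in>carrier G. ga_of g \<otimes>\<^bsub>FG\<^esub> d \<otimes>\<^bsub>FG\<^esub> ga_of (inv g)) z = (0 :: 'a)"
proof -
  have "inv g \<otimes> (z \<otimes> g) \<notin> N" if g: "g \<in> carrier G" for g
  proof
    assume "inv g \<otimes> (z \<otimes> g) \<in> N"
    then have "g \<otimes> (inv g \<otimes> (z \<otimes> g)) \<otimes> inv g \<in> N"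
      using N_conj_closed(2)[OF g] by blast
    with g z show False
      by (simp add: m_assoc)
  qed
  then show ?thesis
    using z d by (simp add: sum_fun_apply conj_ga_of_apply)
qed

text \<open>\<open>d\<close> is minus the indicator of a set of representatives of the nontrivial
  \<open>conj_y\<close>-orbits in \<open>N\<close>, each orbit being represented by its \<open>\<iota>\<close>-least element.\<close>

lemma exists_trace_preimage:
  obtains d where "(\<Sum>g\<in>carrier G. ga_of g \<otimes>\<^bsub>FG\<^esub> d \<otimes>\<^bsub>FG\<^esub> ga_of (inv g)) = ga_of \<one> - e"
proof -
  obtain \<iota> :: "'g \<Rightarrow> nat" where \<iota>: "inj_on \<iota> N"
    using finite_imp_inj_to_nat_seg[OF finite_subset[OF subgroup.subset[OF N_subgroup] finite_carrier]]
    by blast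
  define rep where "rep z \<longleftrightarrow> z \<in> N \<and> \<iota> z < \<iota> (conj_y z) \<and> \<iota> z < \<iota> (conj_y (conj_y z))" for z
  define d :: "'g \<Rightarrow> 'a" where "d z = (if rep z then - 1 else 0)" for z
  have "(\<Sum>g\<in>carrier G. ga_of g \<otimes>\<^bsub>FG\<^esub> d \<otimes>\<^bsub>FG\<^esub> ga_of (inv g)) z = (ga_of \<one> - e) z" for z
  proof (cases "z \<in> N")
    case z: True
    show ?thesis
    proof (cases "z = \<one>")
      case True
      then show ?thesis
        unfolding trace_apply_N[OF z] by (simp add: d_def rep_def ga_of_def ga_indicator_def)
    next
      case False
      let ?z1 = "conj_y z" and ?z2 = "conj_y (conj_y z)"
      have "\<iota> ?z1 \<noteq> \<iota> z" "\<iota> ?z2 \<noteq> \<iota> z" "\<iota> ?z2 \<noteq> \<iota> ?z1"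
        using conj_y_orbit_distinct[OF z False] inj_on_eq_iff[OF \<iota>] z conj_y_closed by metis+
      moreover have "conj_y ?z2 = z"
        by (rule conj_y_cube[OF z])
      ultimately have "d z + d ?z1 + d ?z2 = - 1"
        using z conj_y_closed by (auto simp: d_def rep_def)
      then show ?thesis
        unfolding trace_apply_N[OF z] using z False by (simp add: ga_of_def ga_indicator_def)
    qed
  next
    case False
    have d_supp: "\<And>z. z \<notin> N \<Longrightarrow> d z = 0"
      by (simp add: d_def rep_def)
    have "(ga_of \<one> - e) z = 0"
      using False by (auto simp: ga_of_def ga_indicator_def)
    then show ?thesis
      using trace_apply_outside_N[OF d_supp _ False]
      by (cases "z \<in> carrier G") (simp_all add: sum_fun_apply mult_FG_outside)
  qed
  with that show ?thesis
    by blast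
qed

theorem jacobson_radical_eq: "jacobson_radical FG = V"
proof
  interpret R: ring "FG :: ('g \<Rightarrow> 'a) ring"
    by (rule group_algebra_ring)
  show "jacobson_radical FG \<subseteq> V"
  proof
    fix a :: "'g \<Rightarrow> 'a"
    assume a: "a \<in> jacobson_radical FG"
    then have aG: "a \<in> carrier FG"
      by (simp add: jacobson_radical_def)
    have "augmentation G a = 0"
      using a augmentation_ideal_maximal by (auto simp: jacobson_radical_def)
    obtain d where d: "(\<Sum>g\<in>carrier G. ga_of g \<otimes>\<^bsub>FG\<^esub> d \<otimes>\<^bsub>FG\<^esub> ga_of (inv g)) = ga_of \<one> - e"
      by (rule exists_trace_preimage)
    have "(ga_of \<one> - e) \<otimes>\<^bsub>FG\<^esub> (ga_of \<one> - e) = ga_of \<one> - e"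
      by (simp add: mult_FG_distrib mult_FG_one e_idem)
    then have "(ga_of \<one> - e) \<otimes>\<^bsub>FG\<^esub> a = 0"
      using trace_idempotent_annihilates_jacobson_radical[OF finite_field d[symmetric] _ a] by blast
    then have "e \<otimes>\<^bsub>FG\<^esub> a = a"
      using aG by (simp add: mult_FG_distrib mult_FG_one)
    then show "a \<in> V"
      using aG \<open>augmentation G a = 0\<close> coset_invariant_iff_e_mult[OF aG]
      by (simp add: coset_augmentation_ideal_def)
  qed
  show "V \<subseteq> jacobson_radical FG"
  proof (rule R.nil_left_ideal_subset_jacobson_radical[OF V_left_ideal])
    fix v assume v: "v \<in> V"
    then have "v \<in> carrier FG"
      by (simp add: coset_augmentation_ideal_def)
    then have "v [^]\<^bsub>FG\<^esub> (3::nat) = v \<otimes>\<^bsub>FG\<^esub> (v \<otimes>\<^bsub>FG\<^esub> v)"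
      by (simp add: numeral_3_eq_3 R.nat_pow_Suc2 mult_FG_one mult_FG_assoc)
    then show "\<exists>n::nat. v [^]\<^bsub>FG\<^esub> n = \<zero>\<^bsub>FG\<^esub>"
      using V_cube[OF v] by auto
  qed
qed

lemma s_elem_eq: "s_elem G = ga_of \<one> + (ga_indicator (carrier G) - e)"
proof
  fix z
  have "\<not> 3 dvd card N"
    using card_N_mod_3 by presburger
  then show "s_elem G z = (ga_of \<one> + (ga_indicator (carrier G) - e)) z"
    using ord_power_of_3_iff[of z]
    by (cases "z \<in> carrier G"; cases "z = \<one>") (auto simp: s_elem_def ga_of_def ga_indicator_def)
qed

lemma mult_s_elem_apply:
  assumes f: "f \<in> carrier FG" and z: "z \<in> carrier G"
  shows "(f \<otimes>\<^bsub>FG\<^esub> s_elem G) z = f z + augmentation G f - (f \<otimes>\<^bsub>FG\<^esub> e) z"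
    and "(s_elem G \<otimes>\<^bsub>FG\<^esub> f) z = f z + augmentation G f - (e \<otimes>\<^bsub>FG\<^esub> f) z"
  unfolding s_elem_eq using f z
  by (simp_all add: mult_FG_distrib mult_FG_one mult_indicator_carrier_apply)

theorem Anh_s_elem_eq: "Anh G (s_elem G) = V"
proof
  show "Anh G (s_elem G) \<subseteq> V"
  proof
    fix f :: "'g \<Rightarrow> 'a"
    assume "f \<in> Anh G (s_elem G)"
    then have f: "f \<in> carrier FG" and fs: "f \<otimes>\<^bsub>FG\<^esub> s_elem G = 0"
      by (auto simp: Anh_def)
    have f_eq: "f z = (f \<otimes>\<^bsub>FG\<^esub> e) z - augmentation G f" if "z \<in> carrier G" for z
      using mult_s_elem_apply(1)[OF f that] fs by (simp add: algebra_simps)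
    have inv: "coset_invariant G N f"
      using coset_invariant_mult_indicator_normal[OF N_normal, of f]
      by (simp add: coset_invariant_def f_eq)
    then have "f \<otimes>\<^bsub>FG\<^esub> e = f"
      using e_mult_coset_invariant[OF f] e_central by simp
    then have "augmentation G f = 0"
      using f_eq[of \<one>] by simp
    with f inv show "f \<in> V"
      by (simp add: coset_augmentation_ideal_def)
  qed
  show "V \<subseteq> Anh G (s_elem G)"
  proof
    fix f :: "'g \<Rightarrow> 'a"
    assume "f \<in> V"
    then have f: "f \<in> carrier FG" and "coset_invariant G N f" and aug: "augmentation G f = 0"
      by (auto simp: coset_augmentation_ideal_def)
    then have ef: "e \<otimes>\<^bsub>FG\<^esub> f = f" and fe: "f \<otimes>\<^bsub>FG\<^esub> e = f"
      using e_mult_coset_invariant e_central by metis+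
    have "(f \<otimes>\<^bsub>FG\<^esub> s_elem G) z = 0 \<and> (s_elem G \<otimes>\<^bsub>FG\<^esub> f) z = 0" for z
      by (cases "z \<in> carrier G") (simp_all add: mult_s_elem_apply[OF f] ef fe aug mult_FG_outside)
    with f show "f \<in> Anh G (s_elem G)"
      by (simp add: Anh_def fun_eq_iff)
  qed
qed

definition basis_1 :: "'g \<Rightarrow> 'a" where
  "basis_1 = e - ga_indicator (N #> y)"

definition basis_2 :: "'g \<Rightarrow> 'a" where
  "basis_2 = e - ga_indicator (N #> (y \<otimes> y))"

lemma basis_values:
  "basis_1 \<one> = 1" "basis_1 y = -1" "basis_1 (y \<otimes> y) = 0"
  "basis_2 \<one> = 1" "basis_2 y = 0" "basis_2 (y \<otimes> y) = -1"
proof -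
  have "x \<in> N #> g \<longleftrightarrow> x \<otimes> inv g \<in> N" if "x \<in> carrier G" "g \<in> carrier G" for x g
    using subgroup.rcos_module[OF N_subgroup is_group] that by blast
  then show "basis_1 \<one> = 1" "basis_1 y = -1" "basis_1 (y \<otimes> y) = 0"
    "basis_2 \<one> = 1" "basis_2 y = 0" "basis_2 (y \<otimes> y) = -1"
    using y_notin_N yy_notin_N y_cube
    by (simp_all add: basis_1_def basis_2_def ga_indicator_def inv_y inv_yy m_assoc)
qed

lemma basis_in_V: "basis_1 \<in> V" "basis_2 \<in> V"
proof -
  have "coset_invariant G N basis_1" "coset_invariant G N basis_2"
    using coset_invariant_e coset_invariant_indicator_rcos[of y] coset_invariant_indicator_rcos[of "y \<otimes> y"]
    by (simp_all add: basis_1_def basis_2_def coset_invariant_def)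
  moreover have "basis_1 \<in> carrier FG" "basis_2 \<in> carrier FG"
    using r_coset_subset_G[OF subgroup.subset[OF N_subgroup]]
    by (simp_all add: basis_1_def basis_2_def ga_indicator_carrier)
  ultimately show "basis_1 \<in> V" "basis_2 \<in> V"
    using augmentation_coset_invariant basis_values by (simp_all add: coset_augmentation_ideal_def)
qed


lemma V_subspace: "ga.subspace V"
  using left_ideal_subspace[OF V_left_ideal] .

lemma V_eq_span: "V = ga.span {basis_1, basis_2}"
proof
  show "ga.span {basis_1, basis_2} \<subseteq> V"
    using basis_in_V V_subspace by (intro ga.span_minimal) auto
  show "V \<subseteq> ga.span {basis_1, basis_2}"
  proof
    fix f assume f: "f \<in> V"
    let ?g = "ga_scale (- f y) basis_1 + ga_scale (- f (y \<otimes> y)) basis_2"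
    have "?g \<in> V"
      by (intro ga.subspace_add[OF V_subspace] ga.subspace_scale[OF V_subspace] basis_in_V)
    then have "f - ?g = 0"
      using f augmentation_coset_invariant[of f] ga.subspace_diff[OF V_subspace f]
      by (intro coset_invariant_eq_zero)
        (auto simp: coset_augmentation_ideal_def ga_scale_def basis_values algebra_simps)
    moreover have "?g \<in> ga.span {basis_1, basis_2}"
      by (intro ga.span_add ga.span_scale ga.span_base) auto
    ultimately show "f \<in> ga.span {basis_1, basis_2}"
      by simp
  qed
qed

theorem dim_V: "dim_F V = 2"
proof -
  have ne: "basis_1 \<noteq> basis_2"
    using basis_values by force
  have "basis_1 \<notin> ga.span {basis_2}"
  proof
    assume "basis_1 \<in> ga.span {basis_2}"
    then obtain k where "basis_1 = ga_scale k basis_2"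
      by (auto simp: ga.span_singleton)
    then have "basis_1 y = k * basis_2 y"
      by (simp add: ga_scale_def)
    then show False
      using basis_values by simp
  qed
  moreover have "basis_2 \<noteq> 0"
    using basis_values by force
  ultimately have "ga.independent {basis_1, basis_2}"
    by (simp add: ga.independent_insert ga.span_empty)
  then have "ga.dim (ga.span {basis_1, basis_2}) = 2"
    using ga.dim_span_eq_card_independent ne by fastforce
  then show ?thesis
    by (simp only: dim_F_def V_eq_span)
qed

end

section \<open>The presentation of \<open>T\<^sub>3\<^sub>m\<close>\<close>

lemma residue_fixed_by_unit_minus_one:
  fixes m i :: nat and t :: int
  assumes coprime: "coprime (int m) (t - 1)" and i: "i < m"
    and fixed: "(nat (t mod int m) * i) mod m = i"
  shows "i = 0"
proof -
  have m: "0 < int m"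
    using i by simp
  have "int (nat (t mod int m) * i mod m) = (t mod int m * int i) mod int m"
    using m by (simp add: zmod_int)
  also have "\<dots> = (t * int i) mod int m"
    by (simp add: mod_mult_left_eq)
  finally have "(t * int i) mod int m = int i mod int m"
    using fixed i by simp
  then have "int m dvd t * int i - int i"
    by (simp only: mod_eq_dvd_iff)
  then have "int m dvd (t - 1) * int i"
    by (simp only: left_diff_distrib mult_1)
  then have "m dvd i"
    by (simp add: coprime_dvd_mult_right_iff[OF coprime])
  then show ?thesis
    using i by (cases "i = 0") (auto dest: dvd_imp_le)
qed

locale t3m_presentation = group G for G :: "('g, 'n) monoid_scheme" (structure) +
  fixes x y :: 'g and m :: nat and t :: int
  assumes x_closed [simp]: "x \<in> carrier G" and y_closed [simp]: "y \<in> carrier G"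
    and generated: "generate G {x, y} = carrier G"
    and x_order: "x [^] m = \<one>" and y_order: "y [^] (3::nat) = \<one>"
    and conj_y_x: "inv y \<otimes> x \<otimes> y = x [^] t"
    and coprime_t: "gcd (int m) (t - 1) = 1"
    and card_carrier: "card (carrier G) = 3 * m"
    and m_pos: "0 < m"
begin

abbreviation N :: "'g set" where
  "N \<equiv> (\<lambda>i::nat. x [^] i) ` {..<m}"

lemma x_pow_mod: "x [^] (i::nat) = x [^] (i mod m)"
proof -
  have "x [^] i = (x [^] m) [^] (i div m) \<otimes> x [^] (i mod m)"
    by (simp add: nat_pow_mult nat_pow_pow mult.commute[of m])
  then show ?thesis
    by (simp add: x_order)
qed

lemma x_pow_in_N [simp]: "x [^] (i::nat) \<in> N"
  using x_pow_mod[of i] m_pos by auto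

lemma N_closed [simp]:
  "n \<in> N \<Longrightarrow> n \<in> carrier G"
  "\<one> \<in> N"
  "a \<in> N \<Longrightarrow> b \<in> N \<Longrightarrow> a \<otimes> b \<in> N"
  "a \<in> N \<Longrightarrow> inv a \<in> N"
proof -
  show "n \<in> N \<Longrightarrow> n \<in> carrier G" "\<one> \<in> N"
    using x_pow_in_N[of 0] by auto
  show "a \<in> N \<Longrightarrow> b \<in> N \<Longrightarrow> a \<otimes> b \<in> N"
    by (auto simp: nat_pow_mult)
  show "inv a \<in> N" if "a \<in> N"
  proof -
    obtain i :: nat where i: "a = x [^] i"
      using \<open>a \<in> N\<close> by blast
    have "x [^] ((m - 1) * i) \<otimes> x [^] i = (x [^] m) [^] i"
      using m_pos by (simp add: nat_pow_mult nat_pow_pow algebra_simps)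
    then have "inv a = x [^] ((m - 1) * i)"
      using i x_order by (intro inv_equality) auto
    then show ?thesis
      by simp
  qed
qed

lemma N_comm: "a \<in> N \<Longrightarrow> b \<in> N \<Longrightarrow> a \<otimes> b = b \<otimes> a"
  by (auto simp: nat_pow_mult add.commute)

lemma conj_y_x_pow: "inv y \<otimes> x [^] (i::nat) \<otimes> y = x [^] (nat (t mod int m) * i)"
proof (induction i)
  case (Suc i)
  have xt: "x [^] t = x [^] nat (t mod int m)"
  proof -
    have "x [^] t = x [^] (int m * (t div int m) + t mod int m)"
      by simp
    also have "\<dots> = x [^] (int m * (t div int m)) \<otimes> x [^] (t mod int m)"
      by (rule int_pow_mult[OF x_closed])
    also have "x [^] (int m * (t div int m)) = \<one>"
      using x_order by (simp add: int_pow_pow[symmetric] int_pow_int)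
    also have "x [^] (t mod int m) = x [^] nat (t mod int m)"
      using m_pos by (simp add: pow_nat)
    finally show ?thesis
      by simp
  qed
  have "inv y \<otimes> x [^] Suc i \<otimes> y = (inv y \<otimes> x [^] i \<otimes> y) \<otimes> (inv y \<otimes> x \<otimes> y)"
    by (simp add: m_assoc)
  also have "\<dots> = x [^] (nat (t mod int m) * Suc i)"
    using Suc conj_y_x xt by (simp add: nat_pow_mult add.commute)
  finally show ?case .
qed simp

lemma N_conj_y: "n \<in> N \<Longrightarrow> inv y \<otimes> n \<otimes> y \<in> N"
  using conj_y_x_pow by auto

lemma y_cube: "y \<otimes> y \<otimes> y = \<one>"
  using y_order by (simp add: numeral_3_eq_3 m_assoc)

lemma N_conj_y_inv: "n \<in> N \<Longrightarrow> y \<otimes> n \<otimes> inv y \<in> N"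
proof -
  assume n: "n \<in> N"
  have y3: "y \<otimes> (y \<otimes> (y \<otimes> z)) = z" if "z \<in> carrier G" for z
    using y_cube that by (simp add: m_assoc[symmetric])
  have "inv y = y \<otimes> y"
    using inv_equality[of "y \<otimes> y" y] y_cube by simp
  then have "y \<otimes> n \<otimes> inv y = inv y \<otimes> (inv y \<otimes> n \<otimes> y) \<otimes> y"
    using n by (simp add: m_assoc y3)
  then show ?thesis
    using N_conj_y[OF N_conj_y[OF n]] by simp
qed

lemma N_conj_y_pow: "n \<in> N \<Longrightarrow> y [^] (j::nat) \<otimes> n \<otimes> inv (y [^] j) \<in> N"
proof (induction j arbitrary: n)
  case (Suc j)
  have "y [^] Suc j \<otimes> n \<otimes> inv (y [^] Suc j) = y [^] j \<otimes> (y \<otimes> n \<otimes> inv y) \<otimes> inv (y [^] j)"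
    using Suc.prems by (simp add: m_assoc inv_mult_group nat_pow_Suc2)
  then show ?case
    using Suc.IH[OF N_conj_y_inv[OF Suc.prems]] by simp
qed simp

lemma y_pow_mod: "y [^] (j::nat) = y [^] (j mod 3)"
proof -
  have "y [^] j = (y [^] (3::nat)) [^] (j div 3) \<otimes> y [^] (j mod 3)"
    by (simp add: nat_pow_mult nat_pow_pow)
  then show ?thesis
    by (simp add: y_order)
qed

abbreviation NY :: "'g set" where
  "NY \<equiv> {n \<otimes> y [^] j | n j. n \<in> N \<and> j < (3::nat)}"

lemma NY_mult_closed:
  assumes a: "a \<in> NY" and b: "b \<in> NY"
  shows "a \<otimes> b \<in> NY"
proof -
  obtain n and j :: nat where n: "n \<in> N" and a_eq: "a = n \<otimes> y [^] j"
    using a by blast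
  obtain n' and j' :: nat where n': "n' \<in> N" and b_eq: "b = n' \<otimes> y [^] j'"
    using b by blast
  have "a \<otimes> b = (n \<otimes> (y [^] j \<otimes> n' \<otimes> inv (y [^] j))) \<otimes> y [^] (j + j')"
    unfolding a_eq b_eq using n n' by (simp add: m_assoc nat_pow_mult[symmetric])
  also have "\<dots> = (n \<otimes> (y [^] j \<otimes> n' \<otimes> inv (y [^] j))) \<otimes> y [^] ((j + j') mod 3)"
    using y_pow_mod by metis
  finally have "a \<otimes> b = (n \<otimes> (y [^] j \<otimes> n' \<otimes> inv (y [^] j))) \<otimes> y [^] ((j + j') mod 3)" .
  moreover have "n \<otimes> (y [^] j \<otimes> n' \<otimes> inv (y [^] j)) \<in> N"
    using n n' N_conj_y_pow by simp
  moreover have "(j + j') mod 3 < (3::nat)"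
    by simp
  ultimately show ?thesis
    by blast
qed

lemma carrier_eq_cosets: "carrier G = NY"
proof
  show "NY \<subseteq> carrier G"
    by auto
  have coset: "n \<otimes> y [^] j \<in> NY" if "n \<in> N" "j < (3::nat)" for n j
    using that by blast
  show "carrier G \<subseteq> NY"
  proof
    fix g assume "g \<in> carrier G"
    then have "g \<in> generate G {x, y}"
      using generated by simp
    then show "g \<in> NY"
    proof (induction rule: generate.induct)
      case one
      show ?case using coset[of \<one> 0] by simp
    next
      case (incl h)
      have "x \<in> NY" "y \<in> NY"
        using coset[of x 0] coset[of \<one> 1] x_pow_in_N[of 1] by simp_all
      with incl show ?case
        by blast
    next
      case (inv h)
      have "inv y = \<one> \<otimes> y [^] (2::nat)"
        using inv_equality[of "y \<otimes> y" y] y_cube by (simp add: numeral_2_eq_2)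
      then have "inv x \<in> NY" "inv y \<in> NY"
        using coset[of "inv x" 0] coset[of \<one> 2] N_closed(4)[OF x_pow_in_N[of 1]] by simp_all
      with inv show ?case
        by blast
    next
      case (eng h1 h2)
      then show ?case
        using NY_mult_closed by blast
    qed
  qed
qed

lemma card_N_and_decomp:
  "card N = m \<and> bij_betw (\<lambda>(n, j). n \<otimes> y [^] j) (N \<times> {..<3::nat}) (carrier G)"
proof -
  let ?f = "\<lambda>(n, j::nat). n \<otimes> y [^] j"
  have image: "?f ` (N \<times> {..<3}) = carrier G"
    unfolding carrier_eq_cosets by (force simp: image_iff)
  have "card N \<le> m"
    using card_image_le[of "{..<m}"] by simp
  moreover have "card (carrier G) \<le> card (N \<times> {..<3::nat})"
    using card_image_le[of "N \<times> {..<3::nat}" ?f] image by simp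
  ultimately have card_N: "card N = m"
    using card_carrier by (simp add: card_cartesian_product)
  then have "card (?f ` (N \<times> {..<3})) = card (N \<times> {..<3::nat})"
    using image card_carrier by (simp add: card_cartesian_product)
  then have "inj_on ?f (N \<times> {..<3})"
    by (intro eq_card_imp_inj_on) simp
  with image card_N show ?thesis
    by (simp add: bij_betw_def)
qed

lemma N_normal: "N \<lhd> G"
  unfolding normal_inv_iff
proof (intro conjI ballI)
  show "subgroup N G"
    by (rule subgroupI) (use m_pos in auto)
  fix g n assume g: "g \<in> carrier G" and n: "n \<in> N"
  obtain a j where a: "a \<in> N" and "g = a \<otimes> y [^] (j::nat)"
    using g carrier_eq_cosets by blast
  then have "g \<otimes> n \<otimes> inv g = a \<otimes> (y [^] j \<otimes> n \<otimes> inv (y [^] j)) \<otimes> inv a"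
    using n by (simp add: m_assoc inv_mult_group)
  also have "\<dots> = y [^] j \<otimes> n \<otimes> inv (y [^] j)"
    using a N_comm[OF a N_conj_y_pow[OF n]] N_conj_y_pow[OF n] by (simp add: m_assoc)
  finally show "g \<otimes> n \<otimes> inv g \<in> N"
    using N_conj_y_pow[OF n] by simp
qed

lemma N_fixed_point_free:
  assumes n: "n \<in> N" and fixed: "inv y \<otimes> n \<otimes> y = n"
  shows "n = \<one>"
proof -
  obtain i where i: "i < m" "n = x [^] i"
    using n by blast
  have inj: "inj_on (\<lambda>i::nat. x [^] i) {..<m}"
    using card_N_and_decomp by (intro eq_card_imp_inj_on) simp_all
  have "x [^] ((nat (t mod int m) * i) mod m) = x [^] i"
    using conj_y_x_pow[of i] fixed i x_pow_mod by metis
  then have "(nat (t mod int m) * i) mod m = i"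
    using inj i(1) m_pos by (auto simp: inj_on_def)
  then have "i = 0"
    using coprime_t i(1) by (intro residue_fixed_by_unit_minus_one) (simp_all add: coprime_iff_gcd_eq_1)
  then show ?thesis
    using i by simp
qed

lemma c3_frobenius: "c3_frobenius G N y"
proof -
  have "finite (carrier G)"
    using card_carrier m_pos by (intro card_ge_0_finite) simp
  then have "finite_group G"
    by (intro finite_group.intro finite_group_axioms.intro is_group)
  moreover have "c3_frobenius_axioms G N y"
    using N_normal N_comm y_closed y_cube conjunct2[OF card_N_and_decomp] N_fixed_point_free
    by (rule c3_frobenius_axioms.intro)
  ultimately show ?thesis
    by (rule c3_frobenius.intro)
qed

end

theorem proposition3p6:
  fixes G :: "('g, 'n) monoid_scheme" and x y :: 'g
    and k :: nat and m :: nat and t :: int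
  assumes F_finite: "finite (UNIV :: 'a::field set)"
    and F_char: "CHAR('a) = 3"
    and m_def: "m = 3 * k + 1"
    and t_cube: "[t ^ 3 = 1] (mod int m)"
    and t_gcd: "gcd (int m) (t - 1) = 1"
    and G_group: "group G"
    and xy_in: "x \<in> carrier G" "y \<in> carrier G"
    and G_gen: "generate G {x, y} = carrier G"
    and rel_x: "x [^]\<^bsub>G\<^esub> m = \<one>\<^bsub>G\<^esub>"
    and rel_y: "y [^]\<^bsub>G\<^esub> (3::nat) = \<one>\<^bsub>G\<^esub>"
    and rel_xy: "inv\<^bsub>G\<^esub> y \<otimes>\<^bsub>G\<^esub> x \<otimes>\<^bsub>G\<^esub> y = x [^]\<^bsub>G\<^esub> t"
    and G_order: "card (carrier G) = 3 * m"
  shows "dim_F (jacobson_radical (group_algebra G :: ('g \<Rightarrow> 'a) ring)) = 2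
       \<and> dim_F (Anh G (s_elem G :: 'g \<Rightarrow> 'a)) = 2"
proof -
  interpret T: t3m_presentation G x y m t
    using G_group xy_in G_gen rel_x rel_y rel_xy t_gcd G_order m_def
    by (intro t3m_presentation.intro t3m_presentation_axioms.intro) auto
  have "card T.N mod 3 = 1"
    using T.card_N_and_decomp m_def by simp
  then interpret A: c3_frobenius_algebra G T.N y "TYPE('a)"
    by (intro c3_frobenius_algebra.intro[OF T.c3_frobenius]
        c3_frobenius_algebra_axioms.intro[OF F_finite F_char])
  show ?thesis
    using A.jacobson_radical_eq A.Anh_s_elem_eq A.dim_V by simp
qed

end
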